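(* If a finitely generated residually finite group $\Gamma$ is presentable by a product, then its rank gradient vanishes: $\mathrm{RG}(\Gamma)=0$.
   Context: For a finitely generated group $\Gamma$ let $d(\Gamma)$ be the minimal number of generators. The rank gradient is $\mathrm{RG}(\Gamma)=\inf_{\Gamma'}\frac{d(\Gamma')-1}{[\Gamma:\Gamma']}$, the infimum taken over all finite index subgroups $\Gamma'\subset\Gamma$. An infinite group $\Gamma$ is presentable by a product if there exist groups $\Gamma_1,\Gamma_2$ and a homomorphism $\varphi\colon\Gamma_1\times\Gamma_2\to\Gamma$ whose image has finite index in $\Gamma$ and such that both $\varphi(\Gamma_1)$ and $\varphi(\Gamma_2)$ are infinite. *)

theory Defs
  imports "HOL-Algebra.Algebra"
begin

definition finitely_generated :: "('a, 'b) monoid_scheme \<Rightarrow> bool" where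
  "finitely_generated G \<longleftrightarrow>
     (\<exists>S. finite S \<and> S \<subseteq> carrier G \<and> generate G S = carrier G)"

definition finite_index_subgroup :: "('a, 'b) monoid_scheme \<Rightarrow> 'a set \<Rightarrow> bool" where
  "finite_index_subgroup G H \<longleftrightarrow> subgroup H G \<and> finite (rcosets\<^bsub>G\<^esub> H)"

definition group_index :: "('a, 'b) monoid_scheme \<Rightarrow> 'a set \<Rightarrow> nat" where
  "group_index G H = card (rcosets\<^bsub>G\<^esub> H)"

definition min_generators :: "('a, 'b) monoid_scheme \<Rightarrow> 'a set \<Rightarrow> nat" where
  "min_generators G H =
     (LEAST n. \<exists>S. finite S \<and> S \<subseteq> H \<and> card S = n \<and> generate G S = H)"

definition residually_finite :: "('a, 'b) monoid_scheme \<Rightarrow> bool" where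
  "residually_finite G \<longleftrightarrow>
     (\<forall>g \<in> carrier G. g \<noteq> \<one>\<^bsub>G\<^esub> \<longrightarrow>
        (\<exists>N. N \<lhd> G \<and> finite (rcosets\<^bsub>G\<^esub> N) \<and> g \<notin> N))"

definition rank_gradient :: "('a, 'b) monoid_scheme \<Rightarrow> real" where
  "rank_gradient G =
     Inf {(real (min_generators G H) - 1) / real (group_index G H) | H. finite_index_subgroup G H}"

definition presentable_by_product_via ::
  "('a, 'b) monoid_scheme \<Rightarrow> ('c, 'd) monoid_scheme \<Rightarrow> ('e, 'f) monoid_scheme
     \<Rightarrow> ('c \<times> 'e \<Rightarrow> 'a) \<Rightarrow> bool" where
  "presentable_by_product_via G G1 G2 phi \<longleftrightarrow>
     infinite (carrier G) \<and> group G1 \<and> group G2 \<and>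
     phi \<in> hom (G1 \<times>\<times> G2) G \<and>
     finite_index_subgroup G (phi ` carrier (G1 \<times>\<times> G2)) \<and>
     infinite (phi ` (carrier G1 \<times> {\<one>\<^bsub>G2\<^esub>})) \<and>
     infinite (phi ` ({\<one>\<^bsub>G1\<^esub>} \<times> carrier G2))"

end

theory Submission
  imports Defs
begin

lemma central_count_bound:
  fixes y a v u s R idx :: nat and \<epsilon> :: real
  assumes "y \<le> a + v * (2 * s)" "a \<le> 1" "1 \<le> v" "R < u" "u * v \<le> idx"
    and "real (1 + 2 * s) \<le> \<epsilon> * real R"
  shows "real y < \<epsilon> * real idx"
proof -
  have "0 < \<epsilon>"
  proof (rule ccontr)
    assume "\<not> 0 < \<epsilon>"
    then have "\<epsilon> * real R \<le> 0" by (simp add: mult_nonpos_nonneg)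
    then show False using assms(6) by linarith
  qed
  have "y \<le> v * (1 + 2 * s)" using assms(1-3) by (simp add: algebra_simps)
  then have "real y \<le> real v * real (1 + 2 * s)" by (metis of_nat_le_iff of_nat_mult)
  also have "\<dots> \<le> real v * (\<epsilon> * real R)" using assms(6) by (intro mult_left_mono) auto
  also have "\<dots> < real v * (\<epsilon> * real u)" using \<open>0 < \<epsilon>\<close> assms(3,4) by (intro mult_strict_left_mono) auto
  also have "\<dots> = \<epsilon> * real (u * v)" by simp
  also have "\<dots> \<le> \<epsilon> * real idx"
  proof (rule mult_left_mono)
    show "real (u * v) \<le> real idx" using assms(5) by (simp only: of_nat_le_iff)
  qed (use \<open>0 < \<epsilon>\<close> in linarith)
  finally show ?thesis .
qed

lemma product_count_bound:
  fixes y u v sa sb R idx :: nat and \<epsilon> :: real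
  assumes "y \<le> u * (2 * sa) + v * (2 * sb)" "R \<le> u" "R \<le> v" "u * v \<le> idx"
    and "4 * real (sa + sb) < \<epsilon> * real R" "0 < \<epsilon>"
  shows "real y < \<epsilon> * real idx"
proof -
  have "\<epsilon> * real R \<le> \<epsilon> * real v" "\<epsilon> * real R \<le> \<epsilon> * real u"
    using assms(2,3,6) by (auto intro!: mult_left_mono)
  then have sa: "4 * real sa < \<epsilon> * real v" and sb: "4 * real sb < \<epsilon> * real u"
    using assms(5) by auto
  have "0 < R" using assms(5) by (cases R) auto
  then have u: "0 < real u" and v: "0 < real v" using assms(2,3) by auto
  have "4 * real sa * real u < \<epsilon> * (real u * real v)"
    using mult_strict_right_mono[OF sa u] by (simp add: ac_simps)
  moreover have "4 * real sb * real v < \<epsilon> * (real u * real v)"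
    using mult_strict_right_mono[OF sb v] by (simp add: ac_simps)
  moreover have "real y \<le> 2 * real sa * real u + 2 * real sb * real v"
    using assms(1) of_nat_mono[OF assms(1)] by (simp add: ac_simps)
  ultimately have "real y < \<epsilon> * (real u * real v)" by linarith
  also have "\<dots> \<le> \<epsilon> * real idx"
  proof (rule mult_left_mono)
    show "real u * real v \<le> real idx" using of_nat_mono[OF assms(4)] by simp
  qed (use assms(6) in linarith)
  finally show ?thesis .
qed

context group
begin

definition separated_mod :: "'a set \<Rightarrow> 'a set \<Rightarrow> bool" where
  "separated_mod H T \<longleftrightarrow> (\<forall>t1\<in>T. \<forall>t2\<in>T. t1 \<otimes> inv t2 \<in> H \<longrightarrow> t1 = t2)"

definition covers_mod :: "'a set \<Rightarrow> 'a set \<Rightarrow> 'a set \<Rightarrow> bool" where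
  "covers_mod H W T \<longleftrightarrow> (\<forall>w\<in>W. \<exists>t\<in>T. w \<otimes> inv t \<in> H)"

lemma inv_mult_cancel_left:
  "x \<in> carrier G \<Longrightarrow> y \<in> carrier G \<Longrightarrow> inv x \<otimes> (x \<otimes> y) = y"
  by (simp add: m_assoc[symmetric])

lemma mult_inv_cancel_left:
  "x \<in> carrier G \<Longrightarrow> y \<in> carrier G \<Longrightarrow> x \<otimes> (inv x \<otimes> y) = y"
  by (simp add: m_assoc[symmetric])

lemma rcos_eq_iff:
  assumes "subgroup H G" "x \<in> carrier G" "y \<in> carrier G"
  shows "H #> x = H #> y \<longleftrightarrow> x \<otimes> inv y \<in> H"
  using assms coset_mult_inv1 coset_mult_inv2 coset_join1 coset_join2 subgroup.subset
  by (metis inv_closed m_closed)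

lemma finite_rcosets_if_covered:
  assumes "subgroup H G" "finite F" "F \<subseteq> carrier G" "covers_mod H (carrier G) F"
  shows "finite (rcosets H)"
proof -
  have "rcosets H \<subseteq> (\<lambda>f. H #> f) ` F"
  proof
    fix C assume "C \<in> rcosets H"
    then obtain g where g: "g \<in> carrier G" "C = H #> g" unfolding RCOSETS_def by blast
    then obtain f where "f \<in> F" "g \<otimes> inv f \<in> H" using assms(4) unfolding covers_mod_def by blast
    then show "C \<in> (\<lambda>f. H #> f) ` F" using rcos_eq_iff[OF assms(1) g(1)] assms(3) g by blast
  qed
  then show ?thesis using assms(2) finite_subset by blast
qed

lemma finite_rcosets_mono:
  assumes K: "subgroup K G" "finite (rcosets K)" and H: "subgroup H G" "K \<subseteq> H"
  shows "finite (rcosets H)"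
proof -
  define rep where "rep C = (SOME g. g \<in> carrier G \<and> C = K #> g)" for C
  have rep: "rep C \<in> carrier G \<and> C = K #> rep C" if "C \<in> rcosets K" for C
  proof -
    have "\<exists>g. g \<in> carrier G \<and> C = K #> g" using that unfolding RCOSETS_def by blast
    then show ?thesis unfolding rep_def by (rule someI_ex)
  qed
  have "covers_mod H (carrier G) (rep ` (rcosets K))"
    unfolding covers_mod_def
  proof
    fix g assume g: "g \<in> carrier G"
    then have C: "K #> g \<in> rcosets K" by (rule rcosetsI[OF subgroup.subset[OF K(1)]])
    then have "g \<otimes> inv (rep (K #> g)) \<in> K" using rep rcos_eq_iff[OF K(1) g] by metis
    then show "\<exists>t\<in>rep ` (rcosets K). g \<otimes> inv t \<in> H" using C H(2) by blast
  qed
  then show ?thesis using finite_rcosets_if_covered[OF H(1)] K(2) rep by blast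
qed

lemma finite_rcosets_Int:
  assumes H: "subgroup H G" "finite (rcosets H)" and K: "subgroup K G" "finite (rcosets K)"
  shows "finite (rcosets (H \<inter> K))"
proof -
  let ?f = "\<lambda>g. (H #> g, K #> g)"
  define rep where "rep p = (SOME g. g \<in> carrier G \<and> ?f g = p)" for p
  have rep: "rep (?f g) \<in> carrier G \<and> ?f (rep (?f g)) = ?f g" if "g \<in> carrier G" for g
    unfolding rep_def by (rule someI_ex) (use that in blast)
  have "finite (?f ` carrier G)"
    by (rule finite_subset[of _ "(rcosets H) \<times> (rcosets K)"])
       (use H K rcosetsI[OF subgroup.subset[OF H(1)]] rcosetsI[OF subgroup.subset[OF K(1)]] in auto)
  moreover have "covers_mod (H \<inter> K) (carrier G) (rep ` ?f ` carrier G)"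
    unfolding covers_mod_def
  proof
    fix g assume g: "g \<in> carrier G"
    then have "g \<otimes> inv (rep (?f g)) \<in> H \<inter> K"
      using rep[OF g] rcos_eq_iff[OF H(1) g] rcos_eq_iff[OF K(1) g] by (metis IntI prod.inject)
    then show "\<exists>t\<in>rep ` ?f ` carrier G. g \<otimes> inv t \<in> H \<inter> K" using g by blast
  qed
  ultimately show ?thesis
    using finite_rcosets_if_covered subgroups_Inter_pair[OF H(1) K(1)] rep by blast
qed

lemma card_le_index_if_separated:
  assumes H: "subgroup H G" "finite (rcosets H)" and T: "T \<subseteq> carrier G" "separated_mod H T"
  shows "finite T \<and> card T \<le> card (rcosets H)"
proof -
  have inj: "inj_on (\<lambda>t. H #> t) T"
    by (rule inj_onI) (metis rcos_eq_iff[OF H(1)] T separated_mod_def subsetD)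
  have sub: "(\<lambda>t. H #> t) ` T \<subseteq> rcosets H"
    using T rcosetsI[OF subgroup.subset[OF H(1)]] by blast
  show ?thesis
    using inj sub H(2) finite_imageD finite_subset card_inj_on_le by metis
qed

lemma separated_mod_insert:
  assumes "subgroup H G" "T \<subseteq> carrier G" "w \<in> carrier G" "separated_mod H T"
    and "\<forall>t\<in>T. w \<otimes> inv t \<notin> H"
  shows "separated_mod H (insert w T)"
proof -
  have "w \<otimes> inv t \<in> H" if "t \<in> T" "t \<otimes> inv w \<in> H" for t
    using subgroup.m_inv_closed[OF assms(1) that(2)] that(1) assms(2,3)
    by (simp add: inv_mult_group subsetD)
  then show ?thesis using assms unfolding separated_mod_def by blast
qed

text \<open>A maximal separated subset of \<open>W\<close> covers \<open>W\<close>; maximal ones exist because separated sets are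
  bounded by the index.\<close>
lemma extend_to_transversal:
  assumes H: "subgroup H G" "finite (rcosets H)" and W: "W \<subseteq> carrier G"
    and T0: "T0 \<subseteq> W" "finite T0" "separated_mod H T0"
  shows "\<exists>T. T0 \<subseteq> T \<and> T \<subseteq> W \<and> finite T \<and> separated_mod H T \<and> covers_mod H W T"
proof -
  define P where "P T \<longleftrightarrow> T0 \<subseteq> T \<and> T \<subseteq> W \<and> finite T \<and> separated_mod H T" for T
  have bound: "card T < Suc (card (rcosets H))" if "P T" for T
  proof -
    have "T \<subseteq> carrier G" "separated_mod H T" using that W unfolding P_def by auto
    then show ?thesis using card_le_index_if_separated[OF H] by (simp add: le_imp_less_Suc)
  qed
  have "P T0" unfolding P_def using T0 by blast
  then obtain T where T: "P T" and max: "\<And>T'. P T' \<Longrightarrow> card T' \<le> card T"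
    using Lattices_Big.ex_has_greatest_nat[of P T0 card] bound by metis
  have "covers_mod H W T"
    unfolding covers_mod_def
  proof (rule ccontr)
    assume "\<not> (\<forall>w\<in>W. \<exists>t\<in>T. w \<otimes> inv t \<in> H)"
    then obtain w where w: "w \<in> W" "\<forall>t\<in>T. w \<otimes> inv t \<notin> H" by blast
    have TW: "T0 \<subseteq> T" "T \<subseteq> W" "finite T" "separated_mod H T" using T unfolding P_def by auto
    have wc: "w \<in> carrier G" using w(1) W by blast
    have "w \<notin> T"
    proof
      assume "w \<in> T"
      then have "w \<otimes> inv w \<notin> H" using w(2) by blast
      then show False using wc subgroup.one_closed[OF H(1)] by simp
    qed
    moreover have "separated_mod H (insert w T)"
      using separated_mod_insert[OF H(1) _ wc TW(4) w(2)] TW(2) W by blast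
    then have "P (insert w T)" unfolding P_def using TW w(1) by blast
    ultimately show False using max[of "insert w T"] TW(3) by simp
  qed
  then show ?thesis using T unfolding P_def by blast
qed

lemma generate_eq_by_transversal_rewriting:
  assumes E: "E \<subseteq> carrier G" "\<And>x. x \<in> E \<Longrightarrow> inv x \<in> E"
    and L: "subgroup L G" "L \<subseteq> generate G E" and Y: "Y \<subseteq> L"
    and T: "T \<subseteq> carrier G" "\<one> \<in> T" "separated_mod L T"
    and step: "\<And>t x. t \<in> T \<Longrightarrow> x \<in> E \<Longrightarrow> \<exists>k\<in>generate G Y. \<exists>t'\<in>T. t \<otimes> x = k \<otimes> t'"
  shows "generate G Y = L"
proof
  show gYL: "generate G Y \<subseteq> L" using generate_subgroup_incl[OF Y L(1)] .
  have gYc: "generate G Y \<subseteq> carrier G" using gYL subgroup.subset[OF L(1)] by blast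
  have rewrite: "\<forall>t\<in>T. \<exists>k\<in>generate G Y. \<exists>t'\<in>T. t \<otimes> g = k \<otimes> t'" if "g \<in> generate G E" for g
    using that
  proof (induction g rule: generate.induct)
    case one
    then show ?case using generate.one[of G Y] T(1) by force
  next
    case (incl x)
    then show ?case using step by blast
  next
    case (inv x)
    then show ?case using step E(2) by blast
  next
    case (eng g1 g2)
    show ?case
    proof
      fix t assume t: "t \<in> T"
      obtain k1 t1 where k1: "k1 \<in> generate G Y" "t1 \<in> T" "t \<otimes> g1 = k1 \<otimes> t1"
        using eng.IH(1) t by blast
      obtain k2 t2 where k2: "k2 \<in> generate G Y" "t2 \<in> T" "t1 \<otimes> g2 = k2 \<otimes> t2"
        using eng.IH(2) k1(2) by blast
      have c: "g1 \<in> carrier G" "g2 \<in> carrier G" "t \<in> carrier G" "t1 \<in> carrier G" "t2 \<in> carrier G"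
        "k1 \<in> carrier G" "k2 \<in> carrier G"
        using eng.hyps generate_incl[OF E(1)] t k1 k2 T(1) gYc by auto
      have "t \<otimes> (g1 \<otimes> g2) = k1 \<otimes> (t1 \<otimes> g2)" using k1(3) c by (metis m_assoc)
      also have "\<dots> = (k1 \<otimes> k2) \<otimes> t2" using k2(3) c by (simp add: m_assoc)
      finally show "\<exists>k\<in>generate G Y. \<exists>t'\<in>T. t \<otimes> (g1 \<otimes> g2) = k \<otimes> t'"
        using generate.eng[OF k1(1) k2(1)] k2(2) by blast
    qed
  qed
  show "L \<subseteq> generate G Y"
  proof
    fix h assume h: "h \<in> L"
    then obtain k t where kt: "k \<in> generate G Y" "t \<in> T" "\<one> \<otimes> h = k \<otimes> t"
      using rewrite L(2) T(2) by blast
    have c: "h \<in> carrier G" "k \<in> carrier G" "t \<in> carrier G"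
      using h kt subgroup.subset[OF L(1)] gYc T(1) by auto
    have "t = inv k \<otimes> h" using kt(3) c by (simp add: inv_solve_left)
    then have "t \<otimes> inv \<one> \<in> L"
      using kt(1) gYL h c subgroup.m_closed[OF L(1)] subgroup.m_inv_closed[OF L(1)] by auto
    then have "t = \<one>" using T kt(2) unfolding separated_mod_def by blast
    then show "h \<in> generate G Y" using kt c by simp
  qed
qed

lemma schreier_generators:
  assumes S: "finite S" "S \<subseteq> carrier G" and H: "subgroup H G" "H \<subseteq> generate G S"
    and T: "finite T" "T \<subseteq> generate G S" "\<one> \<in> T" "separated_mod H T"
      "covers_mod H (generate G S) T"
  shows "\<exists>Y. finite Y \<and> Y \<subseteq> H \<and> generate G Y = H \<and> card Y \<le> card T * (2 * card S)"
proof -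
  define E where "E = S \<union> (\<lambda>x. inv x) ` S"
  define r where "r x = (SOME t. t \<in> T \<and> x \<otimes> inv t \<in> H)" for x
  define Y where "Y = (\<lambda>(t, x). t \<otimes> x \<otimes> inv (r (t \<otimes> x))) ` (T \<times> E)"
  have gSc: "generate G S \<subseteq> carrier G" using generate_incl[OF S(2)] .
  have XS: "E \<subseteq> generate G S" unfolding E_def by (auto intro: generate.incl generate.inv)
  have Xc: "E \<subseteq> carrier G" using XS gSc by blast
  have Tc: "T \<subseteq> carrier G" using T(2) gSc by blast
  have tx: "t \<otimes> x \<in> generate G S" if "t \<in> T" "x \<in> E" for t x
    using that T(2) XS subgroup.m_closed[OF generate_is_subgroup[OF S(2)]] by blast
  have r: "r (t \<otimes> x) \<in> T \<and> t \<otimes> x \<otimes> inv (r (t \<otimes> x)) \<in> H" if "t \<in> T" "x \<in> E" for t x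
    unfolding r_def by (rule someI_ex) (use T(5) tx[OF that] in \<open>auto simp: covers_mod_def\<close>)
  have "generate G Y = H"
  proof (rule generate_eq_by_transversal_rewriting[OF Xc _ H(1) _ _ Tc T(3,4)])
    show "\<And>x. x \<in> E \<Longrightarrow> inv x \<in> E" unfolding E_def using S(2) by auto
    show "H \<subseteq> generate G E" using H(2) mono_generate[of S E] unfolding E_def by blast
    show "Y \<subseteq> H" unfolding Y_def using r by auto
  next
    fix t x assume tx: "t \<in> T" "x \<in> E"
    have "t \<otimes> x = (t \<otimes> x \<otimes> inv (r (t \<otimes> x))) \<otimes> r (t \<otimes> x)"
      using tx r Tc Xc by (simp add: m_assoc subsetD)
    moreover have "t \<otimes> x \<otimes> inv (r (t \<otimes> x)) \<in> generate G Y"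
      unfolding Y_def using tx by (intro generate.incl) force
    ultimately show "\<exists>k\<in>generate G Y. \<exists>t'\<in>T. t \<otimes> x = k \<otimes> t'" using r tx by blast
  qed
  moreover have "finite Y" unfolding Y_def E_def using T(1) S(1) by auto
  moreover have "Y \<subseteq> H" unfolding Y_def using r by auto
  moreover have "card Y \<le> card T * (2 * card S)"
  proof -
    have "card E \<le> 2 * card S"
      unfolding E_def using card_Un_le[of S "(\<lambda>x. inv x) ` S"] card_image_le[OF S(1), of "\<lambda>x. inv x"] by simp
    then have "card (T \<times> E) \<le> card T * (2 * card S)" by (simp add: card_cartesian_product)
    moreover have "card Y \<le> card (T \<times> E)"
      unfolding Y_def by (rule card_image_le) (use T(1) S(1) in \<open>simp add: E_def\<close>)
    ultimately show ?thesis by linarith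
  qed
  ultimately show ?thesis by blast
qed

lemma set_mult_subgroup_if_normalizes:
  assumes L: "subgroup L G" and K: "subgroup K G"
    and norm: "\<And>k l. k \<in> K \<Longrightarrow> l \<in> L \<Longrightarrow> k \<otimes> l \<otimes> inv k \<in> L"
  shows "subgroup (L <#> K) G"
proof (rule subgroupI)
  have Lc: "L \<subseteq> carrier G" and Kc: "K \<subseteq> carrier G" using L K subgroup.subset by auto
  show "L <#> K \<subseteq> carrier G" using setmult_subset_G[OF Lc Kc] .
  show "L <#> K \<noteq> {}" using subgroup.one_closed[OF L] subgroup.one_closed[OF K] unfolding set_mult_def by blast
next
  have Lc: "L \<subseteq> carrier G" and Kc: "K \<subseteq> carrier G" using L K subgroup.subset by auto
  fix x y assume "x \<in> L <#> K" "y \<in> L <#> K"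
  then obtain l k l' k' where lk: "l \<in> L" "k \<in> K" "x = l \<otimes> k" "l' \<in> L" "k' \<in> K" "y = l' \<otimes> k'"
    unfolding set_mult_def by blast
  have c: "l \<in> carrier G" "k \<in> carrier G" "l' \<in> carrier G" "k' \<in> carrier G" using lk Lc Kc by auto
  have "x \<otimes> y = (l \<otimes> (k \<otimes> l' \<otimes> inv k)) \<otimes> (k \<otimes> k')"
    using lk c by (simp add: m_assoc inv_mult_cancel_left)
  moreover have "l \<otimes> (k \<otimes> l' \<otimes> inv k) \<in> L" using lk norm subgroup.m_closed[OF L] by blast
  moreover have "k \<otimes> k' \<in> K" using lk subgroup.m_closed[OF K] by blast
  ultimately show "x \<otimes> y \<in> L <#> K" unfolding set_mult_def by blast
  have "inv x = (inv k \<otimes> inv l \<otimes> inv (inv k)) \<otimes> inv k" using lk c by (simp add: m_assoc inv_mult_group)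
  moreover have "inv k \<otimes> inv l \<otimes> inv (inv k) \<in> L"
    using lk norm subgroup.m_inv_closed[OF K] subgroup.m_inv_closed[OF L] by blast
  moreover have "inv k \<in> K" using lk subgroup.m_inv_closed[OF K] by blast
  ultimately show "inv x \<in> L <#> K" unfolding set_mult_def by blast
qed

lemma mem_set_mult_iff:
  assumes "L \<subseteq> carrier G" "K \<subseteq> carrier G" "x \<in> carrier G"
  shows "x \<in> L <#> K \<longleftrightarrow> (\<exists>k\<in>K. x \<otimes> inv k \<in> L)"
proof
  assume "x \<in> L <#> K"
  then obtain l k where "l \<in> L" "k \<in> K" "x = l \<otimes> k" unfolding set_mult_def by blast
  then show "\<exists>k\<in>K. x \<otimes> inv k \<in> L" using assms by (metis inv_solve_right subsetD)
next
  assume "\<exists>k\<in>K. x \<otimes> inv k \<in> L"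
  then obtain k where "k \<in> K" "x \<otimes> inv k \<in> L" by blast
  moreover have "x = (x \<otimes> inv k) \<otimes> k" using \<open>k \<in> K\<close> assms by (simp add: m_assoc subsetD)
  ultimately show "x \<in> L <#> K" unfolding set_mult_def by blast
qed

lemma product_transversal_eq:
  assumes A0: "subgroup A0 G" and B0: "subgroup B0 G"
    and comm: "\<And>a b. a \<in> A0 \<Longrightarrow> b \<in> B0 \<Longrightarrow> a \<otimes> b = b \<otimes> a"
    and L: "subgroup L G" and U: "U \<subseteq> A0" "separated_mod L U"
    and V: "V \<subseteq> B0" "separated_mod (L <#> A0) V"
    and uv: "u1 \<in> U" "u2 \<in> U" "v1 \<in> V" "v2 \<in> V" "(u1 \<otimes> v1) \<otimes> inv (u2 \<otimes> v2) \<in> L"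
  shows "u1 = u2 \<and> v1 = v2"
proof -
  have c: "u1 \<in> carrier G" "u2 \<in> carrier G" "v1 \<in> carrier G" "v2 \<in> carrier G"
    using uv U V subgroup.subset[OF A0] subgroup.subset[OF B0] by auto
  define x where "x = u1 \<otimes> inv u2"
  define y where "y = v1 \<otimes> inv v2"
  have xA: "x \<in> A0" "inv x \<in> A0" and yB: "y \<in> B0"
    unfolding x_def y_def using uv U V A0 B0 by (auto intro: subgroup.m_closed subgroup.m_inv_closed)
  have xc: "x \<in> carrier G" "y \<in> carrier G" unfolding x_def y_def using c by auto
  have "(u1 \<otimes> v1) \<otimes> inv (u2 \<otimes> v2) = u1 \<otimes> (y \<otimes> inv u2)"
    unfolding y_def using c by (simp add: inv_mult_group m_assoc)
  also have "\<dots> = x \<otimes> y"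
    unfolding x_def using comm[of "inv u2" y] yB uv(2) U c subgroup.m_inv_closed[OF A0] xc
    by (simp add: m_assoc subsetD)
  also have "\<dots> = y \<otimes> x" using comm[OF xA(1) yB] .
  finally have yx: "y \<otimes> x \<in> L" using uv(5) by simp
  have "y = (y \<otimes> x) \<otimes> inv x" using xc by (simp add: m_assoc)
  then have "y \<in> L <#> A0" using yx xA(2) unfolding set_mult_def by blast
  then have "v1 = v2" using V(2) uv(3,4) unfolding y_def separated_mod_def by blast
  then have "x \<in> L" using yx xc unfolding y_def using c by simp
  then have "u1 = u2" using U(2) uv(1,2) unfolding x_def separated_mod_def by blast
  then show ?thesis using \<open>v1 = v2\<close> by blast
qed

lemma card_product_transversal_le_index:
  assumes A0: "subgroup A0 G" and B0: "subgroup B0 G"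
    and comm: "\<And>a b. a \<in> A0 \<Longrightarrow> b \<in> B0 \<Longrightarrow> a \<otimes> b = b \<otimes> a"
    and L: "subgroup L G" "finite (rcosets L)" and U: "U \<subseteq> A0" "separated_mod L U"
    and V: "V \<subseteq> B0" "separated_mod (L <#> A0) V"
  shows "card U * card V \<le> card (rcosets L)"
proof -
  let ?T = "(\<lambda>(u, v). u \<otimes> v) ` (U \<times> V)"
  have eq: "u1 = u2 \<and> v1 = v2"
    if "u1 \<in> U" "u2 \<in> U" "v1 \<in> V" "v2 \<in> V" "(u1 \<otimes> v1) \<otimes> inv (u2 \<otimes> v2) \<in> L"
    for u1 u2 v1 v2
    using product_transversal_eq[OF A0 B0 _ L(1) U V that] comm by blast
  have Tc: "?T \<subseteq> carrier G"
    using U V subgroup.subset[OF A0] subgroup.subset[OF B0] by (auto intro!: m_closed)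
  have "separated_mod L ?T" unfolding separated_mod_def using eq by auto
  then have T: "finite ?T" "card ?T \<le> card (rcosets L)"
    using card_le_index_if_separated[OF L Tc] by auto
  have "inj_on (\<lambda>(u, v). u \<otimes> v) (U \<times> V)"
  proof (rule inj_onI, clarify)
    fix u1 v1 u2 v2 assume a: "u1 \<in> U" "v1 \<in> V" "u2 \<in> U" "v2 \<in> V" "u1 \<otimes> v1 = u2 \<otimes> v2"
    have "u2 \<otimes> v2 \<in> carrier G" using a Tc by blast
    then show "u1 = u2 \<and> v1 = v2"
      using eq[of u1 u2 v1 v2] a subgroup.one_closed[OF L(1)] by simp
  qed
  then show ?thesis
    using T finite_imageD card_image card_cartesian_product by metis
qed

lemma product_transversal_generators:
  assumes A0: "subgroup A0 G" and B0: "subgroup B0 G"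
    and comm: "\<And>a b. a \<in> A0 \<Longrightarrow> b \<in> B0 \<Longrightarrow> a \<otimes> b = b \<otimes> a"
    and SB: "finite SB" "SB \<subseteq> B0"
    and L: "subgroup L G" "L \<subseteq> generate G (A0 \<union> SB)"
    and U: "U \<subseteq> A0" "\<one> \<in> U" "separated_mod L U" "covers_mod L A0 U"
    and V: "finite V" "V \<subseteq> B0" "\<one> \<in> V" "separated_mod (L <#> A0) V" "covers_mod (L <#> A0) B0 V"
    and YA: "finite YA" "generate G YA = A0 \<inter> L"
  shows "\<exists>Y. finite Y \<and> Y \<subseteq> L \<and> generate G Y = L \<and> card Y \<le> card YA + card V * (2 * card SB)"
proof -
  have Ac: "A0 \<subseteq> carrier G" and Bc: "B0 \<subseteq> carrier G" and Lc: "L \<subseteq> carrier G"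
    using A0 B0 L subgroup.subset by auto
  define SBpm where "SBpm = SB \<union> (\<lambda>x. inv x) ` SB"
  have SBpm: "SBpm \<subseteq> B0" "finite SBpm" "card SBpm \<le> 2 * card SB"
  proof -
    show "SBpm \<subseteq> B0" unfolding SBpm_def using SB subgroup.m_inv_closed[OF B0] by blast
    show "finite SBpm" unfolding SBpm_def using SB(1) by blast
    show "card SBpm \<le> 2 * card SB" unfolding SBpm_def
      using card_Un_le[of SB "(\<lambda>x. inv x) ` SB"] card_image_le[OF SB(1), of "\<lambda>x. inv x"] by linarith
  qed
  define f where "f v b = (SOME q. fst q \<in> V \<and> snd q \<in> A0 \<and> v \<otimes> b \<otimes> inv (fst q) \<otimes> inv (snd q) \<in> L)" for v b
  have f: "fst (f v b) \<in> V \<and> snd (f v b) \<in> A0 \<and> v \<otimes> b \<otimes> inv (fst (f v b)) \<otimes> inv (snd (f v b)) \<in> L"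
    if "v \<in> V" "b \<in> SBpm" for v b
  proof -
    have vb: "v \<otimes> b \<in> B0" using that V(2) SBpm(1) subgroup.m_closed[OF B0] by blast
    then obtain v' where v': "v' \<in> V" "v \<otimes> b \<otimes> inv v' \<in> L <#> A0" using V(5) unfolding covers_mod_def by blast
    moreover have "v \<otimes> b \<otimes> inv v' \<in> carrier G" using vb v'(1) V(2) Bc by blast
    ultimately obtain c where "c \<in> A0" "v \<otimes> b \<otimes> inv v' \<otimes> inv c \<in> L"
      using mem_set_mult_iff[OF Lc Ac] by blast
    then have "\<exists>q. fst q \<in> V \<and> snd q \<in> A0 \<and> v \<otimes> b \<otimes> inv (fst q) \<otimes> inv (snd q) \<in> L"
      using v'(1) by (intro exI[of _ "(v', c)"]) simp
    then show ?thesis unfolding f_def by (rule someI_ex)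
  qed
  define YB where "YB = (\<lambda>(v, b). v \<otimes> b \<otimes> inv (fst (f v b)) \<otimes> inv (snd (f v b))) ` (V \<times> SBpm)"
  define Y where "Y = YA \<union> YB"
  define T where "T = (\<lambda>(u, v). u \<otimes> v) ` (U \<times> V)"
  have YAL: "YA \<subseteq> A0 \<inter> L" using YA(2) generate.incl[of _ YA G] by blast
  have YL: "Y \<subseteq> L" unfolding Y_def YB_def using YAL f by auto
  have AL: "A0 \<inter> L \<subseteq> generate G Y" using YA(2) mono_generate[of YA Y] unfolding Y_def by blast
  have gYc: "generate G Y \<subseteq> carrier G" using generate_subgroup_incl[OF YL L(1)] Lc by blast
  have Uc: "U \<subseteq> carrier G" and Vc: "V \<subseteq> carrier G" using U V Ac Bc by auto
  have stepA: "\<exists>k\<in>generate G Y. \<exists>t'\<in>T. u \<otimes> v \<otimes> x = k \<otimes> t'"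
    if "u \<in> U" "v \<in> V" "x \<in> A0" for u v x
  proof -
    have ux: "u \<otimes> x \<in> A0" using that U subgroup.m_closed[OF A0] by blast
    obtain u' where u': "u' \<in> U" "u \<otimes> x \<otimes> inv u' \<in> L" using U(4) ux unfolding covers_mod_def by blast
    have c: "u \<in> carrier G" "v \<in> carrier G" "x \<in> carrier G" "u' \<in> carrier G" using that u' Uc Vc Ac by auto
    have "u \<otimes> x \<otimes> inv u' \<in> A0" using ux u' U subgroup.m_closed[OF A0] subgroup.m_inv_closed[OF A0] by blast
    then have k: "u \<otimes> x \<otimes> inv u' \<in> generate G Y" using u' AL by blast
    have "u \<otimes> v \<otimes> x = u \<otimes> (x \<otimes> v)" using comm[OF that(3)] that V c by (simp add: m_assoc subsetD)
    also have "\<dots> = (u \<otimes> x \<otimes> inv u') \<otimes> (u' \<otimes> v)" using c by (simp add: m_assoc inv_mult_cancel_left)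
    finally show ?thesis using k u' that unfolding T_def by blast
  qed
  have stepB: "\<exists>k\<in>generate G Y. \<exists>t'\<in>T. u \<otimes> v \<otimes> b = k \<otimes> t'"
    if "u \<in> U" "v \<in> V" "b \<in> SBpm" for u v b
  proof -
    define v' where "v' = fst (f v b)"
    define c where "c = snd (f v b)"
    have fv: "v' \<in> V" "c \<in> A0" using f[OF that(2,3)] unfolding v'_def c_def by auto
    have k1: "v \<otimes> b \<otimes> inv v' \<otimes> inv c \<in> generate G Y"
      unfolding Y_def YB_def v'_def c_def using that by (intro generate.incl) force
    have cu: "c \<otimes> u \<in> A0" using fv that U subgroup.m_closed[OF A0] by blast
    obtain u'' where u'': "u'' \<in> U" "c \<otimes> u \<otimes> inv u'' \<in> L" using U(4) cu unfolding covers_mod_def by blast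
    have "c \<otimes> u \<otimes> inv u'' \<in> A0" using cu u'' U subgroup.m_closed[OF A0] subgroup.m_inv_closed[OF A0] by blast
    then have k2: "c \<otimes> u \<otimes> inv u'' \<in> generate G Y" using u'' AL by blast
    have c0: "u \<in> carrier G" "v \<in> carrier G" "b \<in> carrier G" "v' \<in> carrier G" "c \<in> carrier G" "u'' \<in> carrier G"
      using that fv u'' Uc Vc Ac SBpm Bc by auto
    have uA: "u \<in> A0" and vB: "v \<in> B0" "inv v' \<in> B0" "b \<in> B0"
      using that fv U V SBpm subgroup.m_inv_closed[OF B0] by auto
    have "(v \<otimes> b \<otimes> inv v' \<otimes> inv c) \<otimes> (c \<otimes> u \<otimes> inv u'') \<otimes> (u'' \<otimes> v') = v \<otimes> b \<otimes> (inv v' \<otimes> u) \<otimes> v'"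
      using c0 by (simp add: m_assoc inv_mult_cancel_left)
    also have "\<dots> = v \<otimes> b \<otimes> (u \<otimes> inv v') \<otimes> v'" using comm[OF uA vB(2)] by simp
    also have "\<dots> = v \<otimes> (b \<otimes> u)" using c0 by (simp add: m_assoc)
    also have "\<dots> = v \<otimes> u \<otimes> b" using comm[OF uA vB(3)] c0 by (simp add: m_assoc)
    also have "\<dots> = u \<otimes> v \<otimes> b" using comm[OF uA vB(1)] by simp
    finally have eq: "(v \<otimes> b \<otimes> inv v' \<otimes> inv c) \<otimes> (c \<otimes> u \<otimes> inv u'') \<otimes> (u'' \<otimes> v') = u \<otimes> v \<otimes> b" .
    have "u'' \<otimes> v' \<in> T" unfolding T_def using u''(1) fv(1) by blast
    then show ?thesis using generate.eng[OF k1 k2] eq[symmetric] by blast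
  qed
  have T_mem: "t \<in> T \<longleftrightarrow> (\<exists>u\<in>U. \<exists>v\<in>V. t = u \<otimes> v)" for t
    unfolding T_def by auto
  have "generate G Y = L"
  proof (rule generate_eq_by_transversal_rewriting[of "A0 \<union> SBpm" L Y T])
    show "A0 \<union> SBpm \<subseteq> carrier G" using Ac SBpm Bc by blast
    show "inv x \<in> A0 \<union> SBpm" if x: "x \<in> A0 \<union> SBpm" for x
    proof (cases "x \<in> A0")
      case True
      then show ?thesis using subgroup.m_inv_closed[OF A0] by blast
    next
      case False
      then consider "x \<in> SB" | s where "s \<in> SB" "x = inv s" using x unfolding SBpm_def by blast
      then show ?thesis
      proof cases
        case 1
        then show ?thesis unfolding SBpm_def by blast
      next
        case 2
        moreover have "s \<in> carrier G" using 2(1) SB(2) Bc by blast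
        ultimately have "inv x = s" by simp
        then show ?thesis using 2(1) unfolding SBpm_def by blast
      qed
    qed
    show "L \<subseteq> generate G (A0 \<union> SBpm)"
      using L(2) mono_generate[of "A0 \<union> SB" "A0 \<union> SBpm"] unfolding SBpm_def by blast
    show "T \<subseteq> carrier G" unfolding T_def using Uc Vc by (auto intro!: m_closed)
    have "\<one> \<otimes> \<one> \<in> T" unfolding T_def using U(2) V(3) by blast
    then show "\<one> \<in> T" by simp
    show "separated_mod L T" unfolding separated_mod_def
    proof (intro ballI impI)
      fix t1 t2 assume t: "t1 \<in> T" "t2 \<in> T" "t1 \<otimes> inv t2 \<in> L"
      obtain u1 v1 where 1: "u1 \<in> U" "v1 \<in> V" "t1 = u1 \<otimes> v1" using t(1) T_mem by blast
      obtain u2 v2 where 2: "u2 \<in> U" "v2 \<in> V" "t2 = u2 \<otimes> v2" using t(2) T_mem by blast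
      have "u1 = u2 \<and> v1 = v2"
        using product_transversal_eq[OF A0 B0 comm L(1) U(1,3) V(2,4) 1(1) 2(1) 1(2) 2(2)] t(3) 1(3) 2(3)
        by blast
      then show "t1 = t2" using 1(3) 2(3) by simp
    qed
    show "\<exists>k\<in>generate G Y. \<exists>t'\<in>T. t \<otimes> x = k \<otimes> t'" if t: "t \<in> T" and x: "x \<in> A0 \<union> SBpm" for t x
    proof -
      have "\<exists>u\<in>U. \<exists>v\<in>V. t = u \<otimes> v" using t T_mem by simp
      then obtain u v where uv: "u \<in> U" "v \<in> V" "t = u \<otimes> v" by blast
      from x consider "x \<in> A0" | "x \<in> SBpm" by blast
      then show ?thesis
      proof cases
        case 1
        show ?thesis unfolding uv(3) by (rule stepA[OF uv(1,2) 1])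
      next
        case 2
        show ?thesis unfolding uv(3) by (rule stepB[OF uv(1,2) 2])
      qed
    qed
  qed (use L YL in auto)
  moreover have "finite Y" unfolding Y_def YB_def using YA(1) V(1) SBpm(2) by auto
  moreover have "card Y \<le> card YA + card V * (2 * card SB)"
  proof -
    have "card YB \<le> card (V \<times> SBpm)" unfolding YB_def using V(1) SBpm(2) by (intro card_image_le) auto
    also have "\<dots> \<le> card V * (2 * card SB)" using SBpm(3) by (simp add: card_cartesian_product)
    finally show ?thesis unfolding Y_def using card_Un_le[of YA YB] by linarith
  qed
  ultimately show ?thesis using YL by blast
qed

definition centre :: "'a set \<Rightarrow> 'a set" where
  "centre D = {x \<in> D. \<forall>d\<in>D. x \<otimes> d = d \<otimes> x}"

definition sparsely_generated :: "real \<Rightarrow> 'a set \<Rightarrow> bool" where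
  "sparsely_generated \<epsilon> L \<longleftrightarrow> subgroup L G \<and> finite (rcosets L) \<and>
     (\<exists>Y. finite Y \<and> Y \<subseteq> L \<and> generate G Y = L \<and> real (card Y) < \<epsilon> * real (card (rcosets L)))"

lemma centre_subgroup:
  assumes D: "subgroup D G"
  shows "subgroup (centre D) G"
proof (rule subgroupI)
  have Dc: "D \<subseteq> carrier G" using subgroup.subset[OF D] .
  show "centre D \<subseteq> carrier G" unfolding centre_def using Dc by blast
  have "\<one> \<in> centre D" unfolding centre_def using subgroup.one_closed[OF D] Dc by (auto simp: subsetD)
  then show "centre D \<noteq> {}" by blast
next
  have Dc: "D \<subseteq> carrier G" using subgroup.subset[OF D] .
  fix a b assume a: "a \<in> centre D" and b: "b \<in> centre D"
  then have c: "a \<in> carrier G" "b \<in> carrier G" "a \<in> D" "b \<in> D" unfolding centre_def using Dc by auto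
  have "inv a \<otimes> d = d \<otimes> inv a" if "d \<in> D" for d
  proof -
    have d: "d \<in> carrier G" and "a \<otimes> d = d \<otimes> a" using that Dc a unfolding centre_def by auto
    then have "inv a \<otimes> (a \<otimes> d) \<otimes> inv a = inv a \<otimes> (d \<otimes> a) \<otimes> inv a" by simp
    then show ?thesis using c d by (simp add: m_assoc inv_mult_cancel_left)
  qed
  then show "inv a \<in> centre D" unfolding centre_def using c subgroup.m_inv_closed[OF D] by blast
  have "a \<otimes> b \<otimes> d = d \<otimes> (a \<otimes> b)" if "d \<in> D" for d
  proof -
    have d: "d \<in> carrier G" and ad: "a \<otimes> d = d \<otimes> a" and bd: "b \<otimes> d = d \<otimes> b"
      using that Dc a b unfolding centre_def by auto
    have "a \<otimes> b \<otimes> d = a \<otimes> (d \<otimes> b)" using bd c d by (simp add: m_assoc)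
    also have "\<dots> = d \<otimes> (a \<otimes> b)" using ad c d by (simp add: m_assoc[symmetric])
    finally show ?thesis .
  qed
  then show "a \<otimes> b \<in> centre D" unfolding centre_def using c subgroup.m_closed[OF D] by blast
qed

lemma conj_mem_Int_normal:
  assumes "N \<lhd> G" "subgroup D G" "g \<in> D" "l \<in> N \<inter> D"
  shows "g \<otimes> l \<otimes> inv g \<in> N \<inter> D"
proof
  have "g \<in> carrier G" using assms(2,3) subgroup.subset by blast
  then show "g \<otimes> l \<otimes> inv g \<in> N" using normal_invE(2)[OF assms(1)] assms(4) by blast
  show "g \<otimes> l \<otimes> inv g \<in> D"
    using assms(3,4) subgroup.m_closed[OF assms(2)] subgroup.m_inv_closed[OF assms(2)] by blast
qed

lemma finite_index_Int_normal:
  assumes "N \<lhd> G" "finite (rcosets N)" "subgroup D G" "finite (rcosets D)"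
  shows "subgroup (N \<inter> D) G" "finite (rcosets (N \<inter> D))"
  using subgroups_Inter_pair finite_rcosets_Int normal_imp_subgroup[OF assms(1)] assms(2-4) by auto

lemma finite_rcosets_carrier: "finite (rcosets (carrier G))"
  by (rule finite_rcosets_if_covered[of _ "{\<one>}"]) (auto simp: subgroup_self covers_mod_def)

lemma residually_finite_avoid:
  assumes rf: "residually_finite G" and F: "finite F" "F \<subseteq> carrier G" "\<one> \<notin> F"
  shows "\<exists>N. N \<lhd> G \<and> finite (rcosets N) \<and> F \<inter> N = {}"
  using F
proof (induction F rule: finite_induct)
  case empty
  then show ?case using normal_self finite_rcosets_carrier by blast
next
  case (insert x F)
  then obtain N where N: "N \<lhd> G" "finite (rcosets N)" "F \<inter> N = {}" by auto
  obtain M where M: "M \<lhd> G" "finite (rcosets M)" "x \<notin> M"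
    using rf insert.prems unfolding residually_finite_def by auto
  have "N \<inter> M \<lhd> G" "finite (rcosets (N \<inter> M))"
    using normal_subgroup_intersect[OF N(1) M(1)]
      finite_rcosets_Int[OF normal_imp_subgroup[OF N(1)] N(2) normal_imp_subgroup[OF M(1)] M(2)] by auto
  moreover have "insert x F \<inter> (N \<inter> M) = {}" using N(3) M(3) by blast
  ultimately show ?case by blast
qed

lemma exists_pow_mem_finite_index:
  assumes z: "z \<in> carrier G" and L: "subgroup L G" "finite (rcosets L)"
  shows "\<exists>n::nat. 0 < n \<and> z [^] n \<in> L"
proof -
  let ?M = "card (rcosets L)"
  have "\<not> inj_on (\<lambda>i::nat. L #> z [^] i) {..?M}"
  proof
    assume inj: "inj_on (\<lambda>i::nat. L #> z [^] i) {..?M}"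
    have "(\<lambda>i::nat. L #> z [^] i) ` {..?M} \<subseteq> rcosets L"
      using z rcosetsI[OF subgroup.subset[OF L(1)]] by auto
    then have "card {..?M} \<le> ?M" using card_inj_on_le[OF inj _ L(2)] by blast
    then show False by simp
  qed
  then obtain i j :: nat where "i \<noteq> j" "L #> z [^] i = L #> z [^] j"
    unfolding inj_on_def by blast
  then obtain i j :: nat where ij: "i < j" "L #> z [^] i = L #> z [^] j"
    by (cases "i < j") (auto simp: neq_iff)
  have "z [^] j = z [^] (j - i) \<otimes> z [^] i" using z ij(1) nat_pow_mult[OF z, of "j - i" i] by simp
  then have "z [^] (j - i) = z [^] j \<otimes> inv (z [^] i)" using z by (simp add: m_assoc)
  moreover have "z [^] j \<otimes> inv (z [^] i) \<in> L" using ij(2)[symmetric] rcos_eq_iff[OF L(1)] z by simp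
  ultimately show ?thesis using ij(1) by (intro exI[of _ "j - i"]) simp
qed

lemma subset_set_mult_one:
  assumes "L \<subseteq> carrier G" "\<one> \<in> K"
  shows "L \<subseteq> L <#> K"
proof
  fix l assume "l \<in> L"
  moreover have "l = l \<otimes> \<one>" using \<open>l \<in> L\<close> assms(1) by (simp add: subsetD)
  ultimately show "l \<in> L <#> K" using assms(2) unfolding set_mult_def by blast
qed

lemma sparse_of_central_transversal:
  assumes D: "subgroup D G" "finite (rcosets D)" and SD: "finite SD" "SD \<subseteq> D" "generate G SD = D"
    and A0: "subgroup A0 G" "A0 \<subseteq> centre D" and N: "N \<lhd> G" "finite (rcosets N)"
    and U: "U \<subseteq> A0" "\<one> \<in> U" "separated_mod (N \<inter> D) U" "covers_mod (N \<inter> D) A0 U" "R < card U"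
    and YA: "finite YA" "card YA \<le> 1" "generate G YA = A0 \<inter> (N \<inter> D)"
    and eps: "real (1 + 2 * card SD) \<le> \<epsilon> * real R"
  shows "sparsely_generated \<epsilon> (N \<inter> D)"
proof -
  define L where "L = N \<inter> D"
  have L: "subgroup L G" "finite (rcosets L)" unfolding L_def using finite_index_Int_normal[OF N D] by auto
  have Dc: "D \<subseteq> carrier G" using subgroup.subset[OF D(1)] .
  have A0D: "A0 \<subseteq> D" using A0(2) unfolding centre_def by blast
  have comm: "a \<otimes> d = d \<otimes> a" if "a \<in> A0" "d \<in> D" for a d
    using that A0(2) unfolding centre_def by blast
  have K: "subgroup (L <#> A0) G"
    using set_mult_subgroup_if_normalizes[OF L(1) A0(1)] conj_mem_Int_normal[OF N(1) D(1)] A0D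
    unfolding L_def by blast
  have "L \<subseteq> L <#> A0" using subset_set_mult_one subgroup.subset[OF L(1)] subgroup.one_closed[OF A0(1)] .
  then have Kfin: "finite (rcosets (L <#> A0))" using finite_rcosets_mono[OF L K] by blast
  have "separated_mod (L <#> A0) {\<one>}" unfolding separated_mod_def by blast
  then obtain V where V: "{\<one>} \<subseteq> V" "V \<subseteq> D" "finite V" "separated_mod (L <#> A0) V"
    "covers_mod (L <#> A0) D V"
    using extend_to_transversal[OF K Kfin Dc, of "{\<one>}"] subgroup.one_closed[OF D(1)] by blast
  have E: "generate G (A0 \<union> SD) = D"
  proof
    show "generate G (A0 \<union> SD) \<subseteq> D" using generate_subgroup_incl[OF _ D(1)] A0D SD(2) by blast
    show "D \<subseteq> generate G (A0 \<union> SD)" using mono_generate[of SD "A0 \<union> SD"] SD(3) by blast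
  qed
  obtain Y where Y: "finite Y" "Y \<subseteq> L" "generate G Y = L" "card Y \<le> card YA + card V * (2 * card SD)"
    using product_transversal_generators[OF A0(1) D(1) comm SD(1,2) L(1) _ U(1-4)[folded L_def]
        V(3,2) _ V(4,5) YA(1) YA(3)[folded L_def]] E V(1) unfolding L_def by blast
  have "card U * card V \<le> card (rcosets L)"
    using card_product_transversal_le_index[OF A0(1) D(1) comm L U(1) U(3)[folded L_def] V(2,4)] .
  moreover have "V \<noteq> {}" using V(1) by blast
  then have "1 \<le> card V" using V(3) by (simp add: Suc_le_eq card_gt_0_iff)
  ultimately have "real (card Y) < \<epsilon> * real (card (rcosets L))"
    using central_count_bound[OF Y(4) YA(2) _ U(5) _ eps] by blast
  then show ?thesis unfolding sparsely_generated_def L_def[symmetric] using L Y by blast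
qed

lemma pow_mem_iff_dvd:
  assumes z: "z \<in> carrier G" and L: "subgroup L G"
    and r: "0 < r" "z [^] r \<in> L" and minimal: "\<And>n. 0 < n \<Longrightarrow> n < r \<Longrightarrow> z [^] n \<notin> L"
  shows "z [^] (k::int) \<in> L \<longleftrightarrow> int r dvd k"
proof
  have zr: "z [^] int r \<in> L" using r(2) by (simp add: int_pow_int)
  assume kL: "z [^] k \<in> L"
  define q where "q = (z [^] int r) [^] (k div int r)"
  have qL: "q \<in> L" unfolding q_def using subgroup_int_pow_closed[OF L zr] .
  have qc: "q \<in> carrier G" unfolding q_def using z by simp
  have "z [^] k = z [^] (int r * (k div int r) + k mod int r)" by simp
  also have "\<dots> = z [^] (int r * (k div int r)) \<otimes> z [^] (k mod int r)" using z by (rule int_pow_mult)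
  also have "\<dots> = q \<otimes> z [^] (k mod int r)" unfolding q_def using z by (simp add: int_pow_pow)
  finally have "z [^] (k mod int r) = inv q \<otimes> z [^] k" using z qc by (simp add: inv_mult_cancel_left)
  then have "z [^] (k mod int r) \<in> L"
    using kL qL subgroup.m_closed[OF L] subgroup.m_inv_closed[OF L] by simp
  moreover have "0 \<le> k mod int r" using r(1) by simp
  ultimately have "z [^] nat (k mod int r) \<in> L" by (metis int_nat_eq int_pow_int)
  moreover have "nat (k mod int r) < r" using r(1) by (simp add: nat_less_iff)
  ultimately have "nat (k mod int r) = 0" using minimal by blast
  then show "int r dvd k" using \<open>0 \<le> k mod int r\<close> by (simp add: dvd_eq_mod_eq_0)
next
  assume "int r dvd k"
  then obtain m where "k = int r * m" by blast
  then have "z [^] k = (z [^] int r) [^] m" using z by (simp add: int_pow_pow)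
  then show "z [^] k \<in> L" using subgroup_int_pow_closed[OF L] r(2) by (simp add: int_pow_int)
qed

lemma cyclic_transversal:
  assumes z: "z \<in> carrier G" and L: "subgroup L G"
    and r: "0 < r" "z [^] r \<in> L" and minimal: "\<And>n. 0 < n \<Longrightarrow> n < r \<Longrightarrow> z [^] n \<notin> L"
  shows "separated_mod L ((\<lambda>i. z [^] i) ` {..<r})"
    and "covers_mod L (generate G {z}) ((\<lambda>i. z [^] i) ` {..<r})"
    and "card ((\<lambda>i. z [^] i) ` {..<r}) = r"
    and "generate G {z [^] r} = generate G {z} \<inter> L"
proof -
  have mem: "z [^] k \<in> L \<longleftrightarrow> int r dvd k" for k :: int
    by (rule pow_mem_iff_dvd[OF z L r]) (rule minimal)
  have gen: "generate G {z} = {z [^] k | k. k \<in> (UNIV :: int set)}" using generate_pow[OF z] .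
  have eq: "i = j" if "i < r" "j < r" "z [^] i \<otimes> inv (z [^] j) \<in> L" for i j
  proof -
    have "z [^] i \<otimes> inv (z [^] j) = z [^] (int i - int j)" using z by (simp add: int_pow_diff int_pow_int)
    then have d: "int r dvd (int i - int j)" using that(3) mem by simp
    show "i = j"
    proof (rule ccontr)
      assume "i \<noteq> j"
      then consider "j < i" | "i < j" by linarith
      then show False
      proof cases
        case 1
        then have "0 < int i - int j" "int i - int j < int r" using that(1,2) by auto
        then show False using zdvd_not_zless d by blast
      next
        case 2
        then have "0 < int j - int i" "int j - int i < int r" using that(1,2) by auto
        moreover have "int r dvd (int j - int i)" using d dvd_minus_iff[of "int r" "int i - int j"] by simp
        ultimately show False using zdvd_not_zless by blast
      qed
    qed
  qed
  show "separated_mod L ((\<lambda>i. z [^] i) ` {..<r})" unfolding separated_mod_def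
  proof (intro ballI impI)
    fix t1 t2 assume t: "t1 \<in> (\<lambda>i. z [^] i) ` {..<r}" "t2 \<in> (\<lambda>i. z [^] i) ` {..<r}" "t1 \<otimes> inv t2 \<in> L"
    obtain i j where "i < r" "j < r" "t1 = z [^] i" "t2 = z [^] j" using t(1,2) by blast
    then show "t1 = t2" using eq t(3) by blast
  qed
  have "inj_on (\<lambda>i. z [^] i) {..<r}"
  proof (rule inj_onI)
    fix i j assume ij: "i \<in> {..<r}" "j \<in> {..<r}" "z [^] i = z [^] j"
    have "z [^] i \<otimes> inv (z [^] j) \<in> L" using ij(3) z subgroup.one_closed[OF L] by simp
    then show "i = j" using eq ij(1,2) by blast
  qed
  then show "card ((\<lambda>i. z [^] i) ` {..<r}) = r" by (simp add: card_image)
  show "covers_mod L (generate G {z}) ((\<lambda>i. z [^] i) ` {..<r})" unfolding covers_mod_def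
  proof
    fix x assume "x \<in> generate G {z}"
    then obtain k where k: "x = z [^] (k::int)" unfolding gen by blast
    have pm: "0 \<le> k mod int r" using r(1) by simp
    have u: "z [^] nat (k mod int r) = z [^] (k mod int r)" using pm by (metis int_nat_eq int_pow_int)
    have "nat (k mod int r) \<in> {..<r}" using r(1) by (simp add: nat_less_iff)
    then have "z [^] nat (k mod int r) \<in> (\<lambda>i. z [^] i) ` {..<r}" by (rule imageI)
    moreover have "x \<otimes> inv (z [^] nat (k mod int r)) = z [^] (k - k mod int r)"
      using k u z by (simp add: int_pow_diff)
    moreover have "int r dvd (k - k mod int r)" by (simp add: minus_mod_eq_mult_div)
    ultimately have "z [^] nat (k mod int r) \<in> (\<lambda>i. z [^] i) ` {..<r}"
      and "x \<otimes> inv (z [^] nat (k mod int r)) \<in> L"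
      using mem by simp_all
    then show "\<exists>t\<in>(\<lambda>i. z [^] i) ` {..<r}. x \<otimes> inv t \<in> L" by (rule bexI[rotated])
  qed
  have zr: "z [^] r \<in> carrier G" using z by simp
  show "generate G {z [^] r} = generate G {z} \<inter> L"
  proof
    show "generate G {z [^] r} \<subseteq> generate G {z} \<inter> L"
    proof
      fix x assume "x \<in> generate G {z [^] r}"
      then obtain m where "x = (z [^] r) [^] (m::int)" unfolding generate_pow[OF zr] by blast
      then have "x = z [^] (int r * m)" using z by (simp add: int_pow_pow flip: int_pow_int)
      moreover have "int r dvd int r * m" by simp
      ultimately show "x \<in> generate G {z} \<inter> L" unfolding gen using mem by blast
    qed
    show "generate G {z} \<inter> L \<subseteq> generate G {z [^] r}"
    proof
      fix x assume x: "x \<in> generate G {z} \<inter> L"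
      then obtain k where k: "x = z [^] (k::int)" unfolding gen by blast
      then have "int r dvd k" using x mem by blast
      then obtain m where "k = int r * m" by blast
      then have "x = (z [^] r) [^] m" using k z by (simp add: int_pow_pow flip: int_pow_int)
      then show "x \<in> generate G {z [^] r}" unfolding generate_pow[OF zr] by blast
    qed
  qed
qed

lemma commute_generate:
  assumes x: "x \<in> carrier G" and F: "F \<subseteq> carrier G" and comm: "\<And>y. y \<in> F \<Longrightarrow> x \<otimes> y = y \<otimes> x"
    and g: "g \<in> generate G F"
  shows "x \<otimes> g = g \<otimes> x"
  using g
proof (induction g rule: generate.induct)
  case one
  show ?case using x by simp
next
  case (incl y)
  then show ?case using comm by blast
next
  case (inv y)
  then have y: "y \<in> carrier G" and xy: "x \<otimes> y = y \<otimes> x" using F comm by auto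
  have "inv y \<otimes> (x \<otimes> y) \<otimes> inv y = inv y \<otimes> (y \<otimes> x) \<otimes> inv y" using xy by simp
  then show ?case using x y by (simp add: m_assoc inv_mult_cancel_left)
next
  case (eng g1 g2)
  have c: "g1 \<in> carrier G" "g2 \<in> carrier G" using eng.hyps generate_incl[OF F] by auto
  have "x \<otimes> (g1 \<otimes> g2) = g1 \<otimes> (x \<otimes> g2)" using eng.IH(1) x c by (simp add: m_assoc[symmetric])
  also have "\<dots> = g1 \<otimes> g2 \<otimes> x" using eng.IH(2) x c by (simp add: m_assoc)
  finally show ?case .
qed

lemma generate_Un_commuting_subset:
  assumes A: "subgroup A G" and B: "subgroup B G"
    and comm: "\<And>a b. a \<in> A \<Longrightarrow> b \<in> B \<Longrightarrow> a \<otimes> b = b \<otimes> a"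
  shows "generate G (A \<union> B) \<subseteq> A <#> B"
proof
  have Ac: "A \<subseteq> carrier G" and Bc: "B \<subseteq> carrier G" using A B subgroup.subset by auto
  have mem: "a \<otimes> b \<in> A <#> B" if "a \<in> A" "b \<in> B" for a b using that unfolding set_mult_def by blast
  fix g assume "g \<in> generate G (A \<union> B)"
  then show "g \<in> A <#> B"
  proof (induction g rule: generate.induct)
    case one
    show ?case using mem[OF subgroup.one_closed[OF A] subgroup.one_closed[OF B]] by simp
  next
    case (incl h)
    then show ?case
    proof
      assume "h \<in> A"
      then show ?thesis using mem[OF _ subgroup.one_closed[OF B]] Ac by (metis r_one subsetD)
    next
      assume "h \<in> B"
      then show ?thesis using mem[OF subgroup.one_closed[OF A]] Bc by (metis l_one subsetD)
    qed
  next
    case (inv h)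
    then show ?case
    proof
      assume "h \<in> A"
      then have "inv h \<in> A" "inv h \<in> carrier G" using subgroup.m_inv_closed[OF A] Ac by auto
      then show ?thesis using mem[OF _ subgroup.one_closed[OF B]] by (metis r_one)
    next
      assume "h \<in> B"
      then have "inv h \<in> B" "inv h \<in> carrier G" using subgroup.m_inv_closed[OF B] Bc by auto
      then show ?thesis using mem[OF subgroup.one_closed[OF A]] by (metis l_one)
    qed
  next
    case (eng h1 h2)
    obtain a1 b1 where 1: "a1 \<in> A" "b1 \<in> B" "h1 = a1 \<otimes> b1" using eng.IH(1) unfolding set_mult_def by blast
    obtain a2 b2 where 2: "a2 \<in> A" "b2 \<in> B" "h2 = a2 \<otimes> b2" using eng.IH(2) unfolding set_mult_def by blast
    have c: "a1 \<in> carrier G" "b1 \<in> carrier G" "a2 \<in> carrier G" "b2 \<in> carrier G" using 1 2 Ac Bc by auto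
    have "h1 \<otimes> h2 = a1 \<otimes> (b1 \<otimes> a2) \<otimes> b2" using 1 2 c by (simp add: m_assoc)
    also have "\<dots> = (a1 \<otimes> a2) \<otimes> (b1 \<otimes> b2)" using comm[OF 2(1) 1(2), symmetric] c by (simp add: m_assoc)
    finally show ?case using mem 1 2 subgroup.m_closed[OF A] subgroup.m_closed[OF B] by metis
  qed
qed

lemma finite_generate_torsion_commuting:
  assumes "finite F" "F \<subseteq> carrier G" "\<And>x y. x \<in> F \<Longrightarrow> y \<in> F \<Longrightarrow> x \<otimes> y = y \<otimes> x"
    and "\<And>x. x \<in> F \<Longrightarrow> ord x \<noteq> 0"
  shows "finite (generate G F)"
  using assms
proof (induction F rule: finite_induct)
  case empty
  then show ?case by (simp add: generate_empty)
next
  case (insert s F)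
  have s: "s \<in> carrier G" and F: "F \<subseteq> carrier G" using insert.prems(1) by auto
  let ?S = "generate G {s}" and ?H = "generate G F"
  have sub: "subgroup ?S G" "subgroup ?H G" using generate_is_subgroup s F by auto
  have fin: "finite ?S" "finite ?H"
    using generate_pow_card[OF s] insert.prems(3) by (metis card.infinite insertI1)
      (rule insert.IH; use insert.prems in auto)
  have comm: "a \<otimes> h = h \<otimes> a" if "a \<in> ?S" "h \<in> ?H" for a h
  proof -
    have hc: "h \<in> carrier G" using that(2) generate_incl[OF F] by blast
    have "s \<otimes> h = h \<otimes> s" using commute_generate[OF s F _ that(2)] insert.prems(2) by blast
    then have "h \<otimes> a = a \<otimes> h" using commute_generate[OF hc _ _ that(1)] s by auto
    then show ?thesis by simp
  qed
  have "generate G (insert s F) \<subseteq> generate G (?S \<union> ?H)"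
    using mono_generate[of "insert s F" "?S \<union> ?H"] generate.incl[of s "{s}" G] generate.incl[of _ F G] by blast
  also have "\<dots> \<subseteq> ?S <#> ?H" using generate_Un_commuting_subset[OF sub comm] .
  finally show ?case using fin by (simp add: set_mult_def finite_subset)
qed

lemma generate_singleton_subset:
  assumes "subgroup H G" "z \<in> H"
  shows "generate G {z} \<subseteq> H"
  using generate_subgroup_incl[of "{z}" H] assms by blast

lemma sparse_of_central_infinite_order:
  assumes rf: "residually_finite G"
    and D: "subgroup D G" "finite (rcosets D)" and SD: "finite SD" "SD \<subseteq> D" "generate G SD = D"
    and z: "z \<in> centre D" "ord z = 0" and eps: "0 < \<epsilon>"
  shows "\<exists>L. sparsely_generated \<epsilon> L"
proof -
  define R where "R = nat \<lceil>real (1 + 2 * card SD) / \<epsilon>\<rceil>"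
  have eR: "real (1 + 2 * card SD) \<le> \<epsilon> * real R"
  proof -
    have "real (1 + 2 * card SD) / \<epsilon> \<le> real R" unfolding R_def by linarith
    then show ?thesis using eps by (simp add: field_simps)
  qed
  have Z: "subgroup (centre D) G" using centre_subgroup[OF D(1)] .
  have zc: "z \<in> carrier G" using z(1) subgroup.subset[OF Z] by blast
  define P where "P = (\<lambda>j::nat. z [^] j) ` {1..R}"
  have "finite P" "P \<subseteq> carrier G" unfolding P_def using zc by auto
  moreover have "\<one> \<notin> P"
  proof
    assume "\<one> \<in> P"
    then obtain j :: nat where "j \<in> {1..R}" "\<one> = z [^] j" unfolding P_def by blast
    moreover have "\<forall>n::nat. n \<noteq> 0 \<longrightarrow> z [^] n \<noteq> \<one>" using ord_eq_0[OF zc] z(2) by blast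
    ultimately show False by (metis atLeastAtMost_iff not_one_le_zero)
  qed
  ultimately obtain N where N: "N \<lhd> G" "finite (rcosets N)" "P \<inter> N = {}"
    using residually_finite_avoid[OF rf] by blast
  define L where "L = N \<inter> D"
  have L: "subgroup L G" "finite (rcosets L)" unfolding L_def using finite_index_Int_normal[OF N(1,2) D] by auto
  define r where "r = (LEAST n::nat. 0 < n \<and> z [^] n \<in> L)"
  have "\<exists>n::nat. 0 < n \<and> z [^] n \<in> L" using exists_pow_mem_finite_index[OF zc L] .
  then have r: "0 < r" "z [^] r \<in> L" using LeastI_ex unfolding r_def by (metis (mono_tags, lifting))+
  have minimal: "z [^] n \<notin> L" if "0 < n" "n < r" for n
    using not_less_Least[of n] that unfolding r_def by blast
  have "R < r"
  proof (rule ccontr)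
    assume "\<not> R < r"
    then have "z [^] r \<in> P" unfolding P_def using r(1) by auto
    then show False using N(3) r(2) unfolding L_def by blast
  qed
  define U where "U = (\<lambda>i::nat. z [^] i) ` {..<r}"
  have A0: "subgroup (generate G {z}) G" "generate G {z} \<subseteq> centre D"
    using generate_is_subgroup[of "{z}"] zc generate_singleton_subset[OF Z z(1)] by auto
  have "U \<subseteq> generate G {z}" unfolding U_def generate_pow[OF zc] by (auto simp flip: int_pow_int)
  moreover have "\<one> \<in> U" unfolding U_def using r(1) by force
  moreover have "separated_mod L U" "covers_mod L (generate G {z}) U" "card U = r"
    "generate G {z [^] r} = generate G {z} \<inter> L"
    unfolding U_def by (rule cyclic_transversal[OF zc L(1) r]; rule minimal; assumption)+
  ultimately have "sparsely_generated \<epsilon> (N \<inter> D)"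
    using sparse_of_central_transversal[OF D SD A0 N(1,2), of U R "{z [^] r}"] \<open>R < r\<close> eR
    unfolding L_def by auto
  then show ?thesis by blast
qed

lemma sparse_of_central_torsion:
  assumes rf: "residually_finite G"
    and D: "subgroup D G" "finite (rcosets D)" and SD: "finite SD" "SD \<subseteq> D" "generate G SD = D"
    and Zinf: "infinite (centre D)" and torsion: "\<And>x. x \<in> centre D \<Longrightarrow> ord x \<noteq> 0"
    and eps: "0 < \<epsilon>"
  shows "\<exists>L. sparsely_generated \<epsilon> L"
proof -
  define R where "R = nat \<lceil>real (1 + 2 * card SD) / \<epsilon>\<rceil>"
  have eR: "real (1 + 2 * card SD) \<le> \<epsilon> * real R"
  proof -
    have "real (1 + 2 * card SD) / \<epsilon> \<le> real R" unfolding R_def by linarith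
    then show ?thesis using eps by (simp add: field_simps)
  qed
  have Z: "subgroup (centre D) G" using centre_subgroup[OF D(1)] .
  obtain F where F: "F \<subseteq> centre D" "finite F" "card F = Suc R"
    using infinite_arbitrarily_large[OF Zinf] by blast
  have Fc: "F \<subseteq> carrier G" using F(1) subgroup.subset[OF Z] by blast
  define A0 where "A0 = generate G F"
  have A0: "subgroup A0 G" "A0 \<subseteq> centre D" "finite A0" "F \<subseteq> A0"
  proof -
    show "subgroup A0 G" unfolding A0_def using generate_is_subgroup[OF Fc] .
    show "A0 \<subseteq> centre D" unfolding A0_def using generate_subgroup_incl[OF F(1) Z] .
    show "F \<subseteq> A0" unfolding A0_def using generate.incl[of _ F G] by blast
    have "x \<otimes> y = y \<otimes> x" if "x \<in> F" "y \<in> F" for x y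
      using that F(1) unfolding centre_def by blast
    then show "finite A0" unfolding A0_def
      using finite_generate_torsion_commuting[OF F(2) Fc] torsion F(1) by blast
  qed
  have A0c: "A0 \<subseteq> carrier G" using subgroup.subset[OF A0(1)] .
  have "finite (A0 - {\<one>})" "A0 - {\<one>} \<subseteq> carrier G" "\<one> \<notin> A0 - {\<one>}" using A0(3) A0c by auto
  then obtain N where N: "N \<lhd> G" "finite (rcosets N)" "(A0 - {\<one>}) \<inter> N = {}"
    using residually_finite_avoid[OF rf] by blast
  define L where "L = N \<inter> D"
  have L: "subgroup L G" unfolding L_def using finite_index_Int_normal[OF N(1,2) D] by auto
  have AL: "A0 \<inter> L = {\<one>}"
    using N(3) subgroup.one_closed[OF A0(1)] subgroup.one_closed[OF L] unfolding L_def by blast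
  have "separated_mod L A0" unfolding separated_mod_def
  proof (intro ballI impI)
    fix u1 u2 assume u: "u1 \<in> A0" "u2 \<in> A0" "u1 \<otimes> inv u2 \<in> L"
    then have "u1 \<otimes> inv u2 \<in> A0" using subgroup.m_closed[OF A0(1)] subgroup.m_inv_closed[OF A0(1)] by blast
    then have "u1 \<otimes> inv u2 = \<one>" using AL u(3) by blast
    moreover have "u1 = (u1 \<otimes> inv u2) \<otimes> u2" using u A0c by (simp add: m_assoc subsetD)
    ultimately show "u1 = u2" using u A0c by (simp add: subsetD)
  qed
  moreover have "covers_mod L A0 A0"
    unfolding covers_mod_def using A0c subgroup.one_closed[OF L] by (metis r_inv subsetD)
  moreover have "R < card A0" using card_mono[OF A0(3,4)] F(3) by simp
  moreover have "generate G {} = A0 \<inter> L" using AL generate_empty by simp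
  ultimately have "sparsely_generated \<epsilon> (N \<inter> D)"
    using sparse_of_central_transversal[OF D SD A0(1,2) N(1,2) _ subgroup.one_closed[OF A0(1)], of R "{}"] eR
    unfolding L_def by auto
  then show ?thesis by blast
qed

lemma sparse_of_infinite_centre:
  assumes rf: "residually_finite G"
    and D: "subgroup D G" "finite (rcosets D)" and SD: "finite SD" "SD \<subseteq> D" "generate G SD = D"
    and Zinf: "infinite (centre D)" and eps: "0 < \<epsilon>"
  shows "\<exists>L. sparsely_generated \<epsilon> L"
proof (cases "\<exists>z\<in>centre D. ord z = 0")
  case True
  then show ?thesis using sparse_of_central_infinite_order[OF rf D SD _ _ eps] by blast
next
  case False
  have "ord x \<noteq> 0" if "x \<in> centre D" for x using False that by auto
  then show ?thesis using sparse_of_central_torsion[OF rf D SD Zinf _ eps] by blast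
qed

lemma finite_set_mult:
  assumes "finite H" "finite K"
  shows "finite (H <#> K)"
  using assms unfolding set_mult_def by simp

lemma sparse_of_unbounded_quotients:
  assumes rf: "residually_finite G" and D: "subgroup D G" "finite (rcosets D)"
    and SA: "finite SA" "SA \<subseteq> carrier G" and A0: "A0 = generate G SA" "A0 \<subseteq> D" "infinite A0"
    and B0: "subgroup B0 G" "B0 \<subseteq> D" and SB: "finite SB" "SB \<subseteq> B0"
    and comm: "\<And>a b. a \<in> A0 \<Longrightarrow> b \<in> B0 \<Longrightarrow> a \<otimes> b = b \<otimes> a"
    and E: "generate G (A0 \<union> SB) = D"
    and unbounded: "\<And>R. \<exists>N V. N \<lhd> G \<and> finite (rcosets N) \<and> V \<subseteq> B0 \<and> finite V \<and> \<one> \<in> V \<and>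
        separated_mod ((N \<inter> D) <#> A0) V \<and> R \<le> card V"
    and eps: "0 < \<epsilon>"
  shows "\<exists>L. sparsely_generated \<epsilon> L"
proof -
  have A0sg: "subgroup A0 G" unfolding A0(1) using generate_is_subgroup[OF SA(2)] .
  have Ac: "A0 \<subseteq> carrier G" and Bc: "B0 \<subseteq> carrier G" using A0sg B0 subgroup.subset by auto
  define R where "R = nat \<lceil>4 * real (card SA + card SB) / \<epsilon>\<rceil> + 1"
  have eR: "4 * real (card SA + card SB) < \<epsilon> * real R"
  proof -
    have "4 * real (card SA + card SB) / \<epsilon> < real R" unfolding R_def by linarith
    then show ?thesis using eps by (simp add: field_simps)
  qed
  obtain N1 V1 where N1: "N1 \<lhd> G" "finite (rcosets N1)"
    and V1: "V1 \<subseteq> B0" "finite V1" "\<one> \<in> V1" "separated_mod ((N1 \<inter> D) <#> A0) V1" "R \<le> card V1"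
    using unbounded[of R] by blast
  obtain F0 where F0: "F0 \<subseteq> A0" "finite F0" "card F0 = R"
    using infinite_arbitrarily_large[OF A0(3)] by blast
  define F where "F = insert \<one> F0"
  have F: "F \<subseteq> A0" "finite F" "R \<le> card F" "\<one> \<in> F"
    unfolding F_def using F0 subgroup.one_closed[OF A0sg] card_insert_le[of F0 \<one>] by auto
  define P where "P = (\<lambda>p. fst p \<otimes> inv (snd p)) ` {p \<in> F \<times> F. fst p \<noteq> snd p}"
  have "finite P" "P \<subseteq> carrier G" unfolding P_def using F(1,2) Ac by (auto intro!: m_closed)
  moreover have "\<one> \<notin> P"
  proof
    assume "\<one> \<in> P"
    then obtain f1 f2 where f: "f1 \<in> F" "f2 \<in> F" "f1 \<noteq> f2" "f1 \<otimes> inv f2 = \<one>" unfolding P_def by auto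
    have c: "f1 \<in> carrier G" "f2 \<in> carrier G" using f(1,2) F(1) Ac by auto
    have "f1 = (f1 \<otimes> inv f2) \<otimes> f2" using c by (simp add: m_assoc)
    also have "\<dots> = f2" using f(4) c by simp
    finally show False using f(3) by contradiction
  qed
  ultimately obtain N2 where N2: "N2 \<lhd> G" "finite (rcosets N2)" "P \<inter> N2 = {}"
    using residually_finite_avoid[OF rf] by blast
  define N where "N = N1 \<inter> N2"
  have N: "N \<lhd> G" "finite (rcosets N)" unfolding N_def
    using normal_subgroup_intersect[OF N1(1) N2(1)]
      finite_rcosets_Int[OF normal_imp_subgroup[OF N1(1)] N1(2) normal_imp_subgroup[OF N2(1)] N2(2)] by auto
  define L where "L = N \<inter> D"
  have L: "subgroup L G" "finite (rcosets L)" unfolding L_def using finite_index_Int_normal[OF N D] by auto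
  have "separated_mod L F" unfolding separated_mod_def
  proof (intro ballI impI)
    fix f1 f2 assume f: "f1 \<in> F" "f2 \<in> F" "f1 \<otimes> inv f2 \<in> L"
    show "f1 = f2"
    proof (rule ccontr)
      assume "f1 \<noteq> f2"
      then have "f1 \<otimes> inv f2 \<in> P" unfolding P_def using f(1,2) by (intro image_eqI[where x = "(f1, f2)"]) auto
      then show False using N2(3) f(3) unfolding L_def N_def by blast
    qed
  qed
  then obtain U where U: "F \<subseteq> U" "U \<subseteq> A0" "finite U" "separated_mod L U" "covers_mod L A0 U"
    using extend_to_transversal[OF L Ac F(1,2)] by blast
  have K: "subgroup (L <#> A0) G"
    using set_mult_subgroup_if_normalizes[OF L(1) A0sg] conj_mem_Int_normal[OF N(1) D(1)] A0(2)
    unfolding L_def by blast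
  have "L \<subseteq> L <#> A0" using subset_set_mult_one subgroup.subset[OF L(1)] subgroup.one_closed[OF A0sg] .
  then have Kfin: "finite (rcosets (L <#> A0))" using finite_rcosets_mono[OF L K] by blast
  have "L <#> A0 \<subseteq> (N1 \<inter> D) <#> A0" unfolding L_def N_def by (intro mono_set_mult) auto
  then have "separated_mod (L <#> A0) V1" using V1(4) unfolding separated_mod_def by blast
  then obtain V where V: "V1 \<subseteq> V" "V \<subseteq> B0" "finite V" "separated_mod (L <#> A0) V"
    "covers_mod (L <#> A0) B0 V"
    using extend_to_transversal[OF K Kfin Bc V1(1,2)] by blast
  have U1: "\<one> \<in> U" "R \<le> card U" using F(3,4) U(1) card_mono[OF U(3,1)] by auto
  have HA: "subgroup (A0 \<inter> L) G" using subgroups_Inter_pair[OF A0sg L(1)] .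
  obtain YA where YA: "finite YA" "YA \<subseteq> A0 \<inter> L" "generate G YA = A0 \<inter> L" "card YA \<le> card U * (2 * card SA)"
  proof -
    have "separated_mod (A0 \<inter> L) U" using U(4) unfolding separated_mod_def by blast
    moreover have "covers_mod (A0 \<inter> L) (generate G SA) U"
      unfolding covers_mod_def
    proof
      fix x assume x: "x \<in> generate G SA"
      then obtain u where u: "u \<in> U" "x \<otimes> inv u \<in> L" using U(5) A0(1) unfolding covers_mod_def by blast
      then have "x \<otimes> inv u \<in> A0"
        using x U(2) A0(1) subgroup.m_closed[OF A0sg] subgroup.m_inv_closed[OF A0sg] by blast
      then show "\<exists>u\<in>U. x \<otimes> inv u \<in> A0 \<inter> L" using u by blast
    qed
    moreover have "A0 \<inter> L \<subseteq> generate G SA" "U \<subseteq> generate G SA" using U(2) A0(1) by auto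
    ultimately have "\<exists>Y. finite Y \<and> Y \<subseteq> A0 \<inter> L \<and> generate G Y = A0 \<inter> L \<and> card Y \<le> card U * (2 * card SA)"
      using schreier_generators[OF SA HA _ U(3) _ U1(1)] by blast
    then show ?thesis using that by blast
  qed
  have V1V: "\<one> \<in> V" "R \<le> card V" using V1(3,5) V(1) card_mono[OF V(3,1)] by auto
  have "L \<subseteq> generate G (A0 \<union> SB)" unfolding E L_def by blast
  then obtain Y where Y: "finite Y" "Y \<subseteq> L" "generate G Y = L" "card Y \<le> card YA + card V * (2 * card SB)"
    using product_transversal_generators[OF A0sg B0(1) comm SB L(1) _ U(2) U1(1) U(4,5) V(3,2) V1V(1)
        V(4,5) YA(1,3)] by blast
  have "card U * card V \<le> card (rcosets L)"
    using card_product_transversal_le_index[OF A0sg B0(1) comm L U(2,4) V(2,4)] .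
  moreover have "card Y \<le> card U * (2 * card SA) + card V * (2 * card SB)" using Y(4) YA(4) by linarith
  ultimately have "real (card Y) < \<epsilon> * real (card (rcosets L))"
    using product_count_bound[OF _ U1(2) V1V(2) _ eR eps] by blast
  then have "sparsely_generated \<epsilon> L" unfolding sparsely_generated_def using L Y by blast
  then show ?thesis by blast
qed

lemma normal_Int_set_mult_subgroup:
  assumes "N \<lhd> G" "subgroup D G" "subgroup A0 G" "A0 \<subseteq> D"
  shows "subgroup ((N \<inter> D) <#> A0) G"
proof (rule set_mult_subgroup_if_normalizes[OF _ assms(3)])
  show "subgroup (N \<inter> D) G" using subgroups_Inter_pair normal_imp_subgroup assms(1,2) by blast
  show "k \<otimes> l \<otimes> inv k \<in> N \<inter> D" if "k \<in> A0" "l \<in> N \<inter> D" for k l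
    using conj_mem_Int_normal[OF assms(1,2)] that assms(4) by blast
qed

lemma commutator_mem_normal:
  assumes N: "N \<lhd> G" and lc: "l \<in> N" "c \<in> carrier G" "b = l \<otimes> c"
    and d: "a \<in> carrier G" "b' \<in> carrier G" and cb: "c \<otimes> b' = b' \<otimes> c" and ba: "b \<otimes> a = a \<otimes> b"
  shows "b \<otimes> (a \<otimes> b') \<otimes> inv b \<otimes> inv (a \<otimes> b') \<in> N"
proof -
  have l: "l \<in> carrier G" using lc(1) normal_imp_subgroup[OF N] subgroup.subset by blast
  have b: "b \<in> carrier G" using lc l by simp
  have "b \<otimes> b' \<otimes> inv b \<otimes> inv b' = l \<otimes> (c \<otimes> b') \<otimes> inv c \<otimes> inv l \<otimes> inv b'"
    using lc l d by (simp add: m_assoc inv_mult_group)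
  also have "\<dots> = l \<otimes> (b' \<otimes> inv l \<otimes> inv b')" using cb lc l d by (simp add: m_assoc)
  finally have "b \<otimes> b' \<otimes> inv b \<otimes> inv b' \<in> N"
    using lc(1) normal_invE(2)[OF N d(2) normal_imp_subgroup[OF N, THEN subgroup.m_inv_closed, OF lc(1)]]
      subgroup.m_closed[OF normal_imp_subgroup[OF N]] by simp
  then have "a \<otimes> (b \<otimes> b' \<otimes> inv b \<otimes> inv b') \<otimes> inv a \<in> N" using normal_invE(2)[OF N d(1)] by blast
  moreover have "a \<otimes> (b \<otimes> b' \<otimes> inv b \<otimes> inv b') \<otimes> inv a = (a \<otimes> b) \<otimes> b' \<otimes> inv b \<otimes> inv b' \<otimes> inv a"
    using b d by (simp add: m_assoc)
  moreover have "b \<otimes> (a \<otimes> b') \<otimes> inv b \<otimes> inv (a \<otimes> b') = (b \<otimes> a) \<otimes> b' \<otimes> inv b \<otimes> inv b' \<otimes> inv a"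
    using b d by (simp add: m_assoc inv_mult_group)
  ultimately show ?thesis using ba by simp
qed

lemma maximal_separated_covers:
  assumes D: "subgroup D G" and A0: "subgroup A0 G" "A0 \<subseteq> D" and B0: "subgroup B0 G"
    and bound: "\<And>N V. N \<lhd> G \<Longrightarrow> finite (rcosets N) \<Longrightarrow> V \<subseteq> B0 \<Longrightarrow> finite V \<Longrightarrow> \<one> \<in> V \<Longrightarrow>
        separated_mod ((N \<inter> D) <#> A0) V \<Longrightarrow> card V < R0"
  obtains N0 V0 where "N0 \<lhd> G" "finite (rcosets N0)" "V0 \<subseteq> B0" "finite V0" "\<one> \<in> V0"
    "separated_mod ((N0 \<inter> D) <#> A0) V0"
    "\<And>N x. N \<lhd> G \<Longrightarrow> finite (rcosets N) \<Longrightarrow> x \<in> B0 \<Longrightarrow> \<exists>v\<in>V0. x \<otimes> inv v \<in> ((N \<inter> N0) \<inter> D) <#> A0"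
proof -
  define P where "P p \<longleftrightarrow> fst p \<lhd> G \<and> finite (rcosets (fst p)) \<and> snd p \<subseteq> B0 \<and> finite (snd p) \<and>
    \<one> \<in> snd p \<and> separated_mod ((fst p \<inter> D) <#> A0) (snd p)" for p
  have "P (carrier G, {\<one>})"
    unfolding P_def separated_mod_def using normal_self finite_rcosets_carrier subgroup.one_closed[OF B0] by auto
  moreover have "\<forall>p. P p \<longrightarrow> card (snd p) < R0" unfolding P_def using bound by blast
  ultimately obtain p where p: "P p" and max: "\<And>q. P q \<Longrightarrow> card (snd q) \<le> card (snd p)"
    using Lattices_Big.ex_has_greatest_nat[of P _ "\<lambda>p. card (snd p)" R0] by metis
  define N0 where "N0 = fst p"
  define V0 where "V0 = snd p"
  have N0: "N0 \<lhd> G" "finite (rcosets N0)" and V0: "V0 \<subseteq> B0" "finite V0" "\<one> \<in> V0"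
    "separated_mod ((N0 \<inter> D) <#> A0) V0"
    using p unfolding P_def N0_def V0_def by auto
  have Bc: "B0 \<subseteq> carrier G" using subgroup.subset[OF B0] .
  have "\<exists>v\<in>V0. x \<otimes> inv v \<in> ((N \<inter> N0) \<inter> D) <#> A0"
    if N: "N \<lhd> G" "finite (rcosets N)" and x: "x \<in> B0" for N x
  proof (rule ccontr)
    assume nc: "\<not> (\<exists>v\<in>V0. x \<otimes> inv v \<in> ((N \<inter> N0) \<inter> D) <#> A0)"
    have N': "N \<inter> N0 \<lhd> G" "finite (rcosets (N \<inter> N0))"
      using normal_subgroup_intersect[OF N(1) N0(1)]
        finite_rcosets_Int[OF normal_imp_subgroup[OF N(1)] N(2) normal_imp_subgroup[OF N0(1)] N0(2)] by auto
    let ?K = "((N \<inter> N0) \<inter> D) <#> A0"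
    have K: "subgroup ?K G" using normal_Int_set_mult_subgroup[OF N'(1) D A0] .
    have "?K \<subseteq> (N0 \<inter> D) <#> A0" by (intro mono_set_mult) auto
    then have "separated_mod ?K V0" using V0(4) unfolding separated_mod_def by blast
    then have "separated_mod ?K (insert x V0)"
      using separated_mod_insert[OF K _ _ _] V0(1) Bc x nc by blast
    moreover have "x \<notin> V0"
    proof
      assume "x \<in> V0"
      moreover have "x \<otimes> inv x \<in> ?K" using x Bc subgroup.one_closed[OF K] by (simp add: subsetD)
      ultimately show False using nc by blast
    qed
    ultimately have "P (N \<inter> N0, insert x V0)" unfolding P_def using N' V0 x by auto
    then have "card (insert x V0) \<le> card V0" using max unfolding V0_def by fastforce
    then show False using \<open>x \<notin> V0\<close> V0(2) by simp
  qed
  then show ?thesis using that N0 V0 by blast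
qed

lemma centre_mem_if_covered:
  assumes rf: "residually_finite G" and D: "subgroup D G"
    and A0: "subgroup A0 G" "A0 \<subseteq> D" and B0: "subgroup B0 G" "B0 \<subseteq> D"
    and comm: "\<And>a b. a \<in> A0 \<Longrightarrow> b \<in> B0 \<Longrightarrow> a \<otimes> b = b \<otimes> a" and DAB: "D \<subseteq> A0 <#> B0"
    and N0: "N0 \<lhd> G" and V0: "V0 \<subseteq> B0" "\<one> \<in> V0" "separated_mod ((N0 \<inter> D) <#> A0) V0"
    and cov: "\<And>N. N \<lhd> G \<Longrightarrow> finite (rcosets N) \<Longrightarrow> \<exists>v\<in>V0. b \<otimes> inv v \<in> ((N \<inter> N0) \<inter> D) <#> A0"
    and b: "b \<in> B0" "b \<in> (N0 \<inter> D) <#> A0"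
  shows "b \<in> centre D"
proof -
  have Ac: "A0 \<subseteq> carrier G" and Bc: "B0 \<subseteq> carrier G"
    using subgroup.subset[OF A0(1)] subgroup.subset[OF B0(1)] by auto
  have bc: "b \<in> carrier G" using b(1) Bc by blast
  let ?H = "(N0 \<inter> D) <#> A0"
  have K0: "subgroup ?H G" using normal_Int_set_mult_subgroup[OF N0 D A0] .
  have "b \<otimes> d = d \<otimes> b" if d: "d \<in> D" for d
  proof -
    have "d \<in> A0 <#> B0" using DAB d by blast
    then obtain a2 b2 where ab: "a2 \<in> A0" "b2 \<in> B0" "d = a2 \<otimes> b2" unfolding set_mult_def by blast
    have abc: "a2 \<in> carrier G" "b2 \<in> carrier G" using ab Ac Bc by auto
    have in_all: "b \<otimes> d \<otimes> inv b \<otimes> inv d \<in> N" if N: "N \<lhd> G" "finite (rcosets N)" for N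
    proof -
      let ?K = "((N \<inter> N0) \<inter> D) <#> A0"
      obtain v where v: "v \<in> V0" "b \<otimes> inv v \<in> ?K" using cov[OF N] by blast
      have "?K \<subseteq> ?H" by (intro mono_set_mult) auto
      have vc: "v \<in> carrier G" using v(1) V0(1) Bc by blast
      have "b \<otimes> inv v \<in> ?H" using v(2) \<open>?K \<subseteq> ?H\<close> by (rule subsetD[rotated])
      then have "inv (b \<otimes> inv v) \<in> ?H" by (rule subgroup.m_inv_closed[OF K0])
      then have "inv (b \<otimes> inv v) \<otimes> b \<in> ?H" using b(2) by (rule subgroup.m_closed[OF K0])
      moreover have "inv (b \<otimes> inv v) \<otimes> b = v \<otimes> inv \<one>" using vc bc by (simp add: inv_mult_group m_assoc)
      ultimately have "v \<otimes> inv \<one> \<in> ?H" by (simp only:)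
      then have "v = \<one>" using V0(3) v(1) V0(2) unfolding separated_mod_def by blast
      then have "b \<in> ?K" using v(2) bc by simp
      then obtain l c where lc: "l \<in> (N \<inter> N0) \<inter> D" "c \<in> A0" "b = l \<otimes> c" unfolding set_mult_def by blast
      show ?thesis unfolding ab(3)
      proof (rule commutator_mem_normal[OF N(1) _ _ lc(3) abc])
        show "l \<in> N" "c \<in> carrier G" using lc Ac by auto
        show "c \<otimes> b2 = b2 \<otimes> c" using comm lc(2) ab(2) by blast
        show "b \<otimes> a2 = a2 \<otimes> b" using comm[OF ab(1) b(1)] by simp
      qed
    qed
    have dc: "d \<in> carrier G" using d subgroup.subset[OF D] by blast
    have "b \<otimes> d \<otimes> inv b \<otimes> inv d = \<one>"
    proof (rule ccontr)
      assume "b \<otimes> d \<otimes> inv b \<otimes> inv d \<noteq> \<one>"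
      moreover have "b \<otimes> d \<otimes> inv b \<otimes> inv d \<in> carrier G" using bc dc by simp
      ultimately obtain N where "N \<lhd> G" "finite (rcosets N)" "b \<otimes> d \<otimes> inv b \<otimes> inv d \<notin> N"
        using rf unfolding residually_finite_def by blast
      then show False using in_all by blast
    qed
    moreover have "b \<otimes> d = (b \<otimes> d \<otimes> inv b \<otimes> inv d) \<otimes> (d \<otimes> b)"
      using bc dc by (simp add: m_assoc inv_mult_cancel_left)
    ultimately show ?thesis using bc dc by simp
  qed
  then show ?thesis unfolding centre_def using b(1) B0(2) by blast
qed

lemma infinite_centre_if_bounded_quotients:
  assumes rf: "residually_finite G" and D: "subgroup D G"
    and A0: "subgroup A0 G" "A0 \<subseteq> D" and B0: "subgroup B0 G" "B0 \<subseteq> D"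
    and comm: "\<And>a b. a \<in> A0 \<Longrightarrow> b \<in> B0 \<Longrightarrow> a \<otimes> b = b \<otimes> a" and DAB: "D \<subseteq> A0 <#> B0"
    and Binf: "infinite B0"
    and bound: "\<And>N V. N \<lhd> G \<Longrightarrow> finite (rcosets N) \<Longrightarrow> V \<subseteq> B0 \<Longrightarrow> finite V \<Longrightarrow> \<one> \<in> V \<Longrightarrow>
        separated_mod ((N \<inter> D) <#> A0) V \<Longrightarrow> card V < R0"
  shows "infinite (centre D)"
proof
  assume fin: "finite (centre D)"
  obtain N0 V0 where N0: "N0 \<lhd> G" "finite (rcosets N0)" and V0: "V0 \<subseteq> B0" "finite V0" "\<one> \<in> V0"
      "separated_mod ((N0 \<inter> D) <#> A0) V0"
    and cov: "\<And>N x. N \<lhd> G \<Longrightarrow> finite (rcosets N) \<Longrightarrow> x \<in> B0 \<Longrightarrow>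
      \<exists>v\<in>V0. x \<otimes> inv v \<in> ((N \<inter> N0) \<inter> D) <#> A0"
    by (rule maximal_separated_covers[OF D A0 B0(1), of R0]) (blast intro: bound)+
  define B' where "B' = B0 \<inter> ((N0 \<inter> D) <#> A0)"
  have "B' \<subseteq> centre D"
  proof
    fix b assume b: "b \<in> B'"
    show "b \<in> centre D"
    proof (rule centre_mem_if_covered[OF rf D A0 B0 comm DAB N0(1) V0(1,3,4)])
      show "\<exists>v\<in>V0. b \<otimes> inv v \<in> ((N \<inter> N0) \<inter> D) <#> A0" if "N \<lhd> G" "finite (rcosets N)" for N
        using cov that b unfolding B'_def by blast
    qed (use b in \<open>auto simp: B'_def\<close>)
  qed
  then have "finite B'" using fin finite_subset by blast
  moreover have "B0 \<subseteq> B' <#> V0"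
  proof
    fix x assume x: "x \<in> B0"
    obtain v where v: "v \<in> V0" "x \<otimes> inv v \<in> ((carrier G \<inter> N0) \<inter> D) <#> A0"
      using cov[OF normal_self finite_rcosets_carrier x] by blast
    have c: "x \<in> carrier G" "v \<in> carrier G" using x v(1) V0(1) subgroup.subset[OF B0(1)] by auto
    have "x \<otimes> inv v \<in> B0" using x v(1) V0(1) subgroup.m_closed[OF B0(1)] subgroup.m_inv_closed[OF B0(1)] by blast
    moreover have "(carrier G \<inter> N0) \<inter> D = N0 \<inter> D"
      using normal_imp_subgroup[OF N0(1)] subgroup.subset by blast
    ultimately have "x \<otimes> inv v \<in> B'" unfolding B'_def using v(2) by simp
    moreover have "x = (x \<otimes> inv v) \<otimes> v" using c by (simp add: m_assoc)
    ultimately show "x \<in> B' <#> V0" using v(1) unfolding set_mult_def by blast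
  qed
  ultimately show False using Binf finite_set_mult V0(2) finite_subset by metis
qed

lemma finite_subset_set_mult:
  assumes "finite S" "S \<subseteq> A <#> B"
  shows "\<exists>SA SB. finite SA \<and> SA \<subseteq> A \<and> finite SB \<and> SB \<subseteq> B \<and> S \<subseteq> SA <#> SB"
  using assms
proof (induction S rule: finite_induct)
  case empty
  then show ?case unfolding set_mult_def by blast
next
  case (insert x S)
  then obtain SA SB where S: "finite SA" "SA \<subseteq> A" "finite SB" "SB \<subseteq> B" "S \<subseteq> SA <#> SB" by blast
  obtain a b where ab: "a \<in> A" "b \<in> B" "x = a \<otimes> b" using insert.prems unfolding set_mult_def by blast
  have "S \<subseteq> insert a SA <#> insert b SB" using S(5) mono_set_mult[of SA "insert a SA" SB "insert b SB"] by blast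
  moreover have "x \<in> insert a SA <#> insert b SB" using ab(3) unfolding set_mult_def by blast
  ultimately show ?case using S ab by (intro exI[of _ "insert a SA"] exI[of _ "insert b SB"]) auto
qed

lemma subset_set_mult_factors:
  assumes A: "subgroup A G" and B: "subgroup B G"
  shows "A \<subseteq> A <#> B" "B \<subseteq> A <#> B"
proof -
  show "A \<subseteq> A <#> B" using subset_set_mult_one[OF subgroup.subset[OF A] subgroup.one_closed[OF B]] .
  show "B \<subseteq> A <#> B"
  proof
    fix b assume b: "b \<in> B"
    have "\<one> \<otimes> b \<in> A <#> B" using b subgroup.one_closed[OF A] unfolding set_mult_def by blast
    then show "b \<in> A <#> B" using b subgroup.subset[OF B] by (simp add: subsetD)
  qed
qed

lemma finitely_generated_factors:
  assumes D: "subgroup D G" and SD: "finite SD" "SD \<subseteq> D" "generate G SD = D"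
    and A: "subgroup A G" and B: "subgroup B G" and DAB: "D = A <#> B"
  obtains SA SB where "finite SA" "SA \<subseteq> A" "finite SB" "SB \<subseteq> B"
    "generate G (generate G SA \<union> SB) = D"
proof -
  have Ac: "A \<subseteq> carrier G" and Bc: "B \<subseteq> carrier G"
    using subgroup.subset[OF A] subgroup.subset[OF B] by auto
  have AD: "A \<subseteq> D" and BD: "B \<subseteq> D" unfolding DAB using subset_set_mult_factors[OF A B] by auto
  obtain SA SB where S: "finite SA" "SA \<subseteq> A" "finite SB" "SB \<subseteq> B" "SD \<subseteq> SA <#> SB"
    using finite_subset_set_mult[OF SD(1) SD(2)[unfolded DAB]] by blast
  let ?E = "generate G (generate G SA \<union> SB)"
  have SAc: "SA \<subseteq> carrier G" and SBc: "SB \<subseteq> carrier G" using S Ac Bc by auto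
  have gSA: "generate G SA \<subseteq> D" using generate_subgroup_incl[OF S(2) A] AD by blast
  have SBD: "SB \<subseteq> D" using S(4) BD by blast
  have "generate G SA \<union> SB \<subseteq> D" using gSA SBD by blast
  then have ED: "?E \<subseteq> D" by (rule generate_subgroup_incl[OF _ D])
  have SDE: "SD \<subseteq> ?E"
  proof
    fix y assume "y \<in> SD"
    then obtain a b where ab: "a \<in> SA" "b \<in> SB" "y = a \<otimes> b" using S(5) unfolding set_mult_def by blast
    have "a \<in> generate G SA" using ab(1) by (rule generate.incl)
    then have "a \<in> ?E" by (rule generate.incl[OF UnI1])
    moreover have "b \<in> ?E" using ab(2) by (rule generate.incl[OF UnI2])
    ultimately show "y \<in> ?E" unfolding ab(3) by (rule generate.eng)
  qed
  have "subgroup ?E G"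
    by (rule generate_is_subgroup) (use generate_incl[OF SAc] SBc in blast)
  then have "generate G SD \<subseteq> ?E" by (rule generate_subgroup_incl[OF SDE])
  then have "?E = D" using ED SD(3) by blast
  then show ?thesis using that S(1-4) by blast
qed

lemma infinite_factor:
  assumes "H \<subseteq> K <#> M" "finite M" "infinite H"
  shows "infinite K"
  using assms finite_set_mult finite_subset by blast

lemma sparse_of_commuting_product:
  assumes rf: "residually_finite G"
    and D: "subgroup D G" "finite (rcosets D)" and SD: "finite SD" "SD \<subseteq> D" "generate G SD = D"
    and A: "subgroup A G" and B: "subgroup B G"
    and comm: "\<And>a b. a \<in> A \<Longrightarrow> b \<in> B \<Longrightarrow> a \<otimes> b = b \<otimes> a"
    and DAB: "D = A <#> B" and Ainf: "infinite A" and Binf: "infinite B"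
    and Zfin: "finite (centre D)" and eps: "0 < \<epsilon>"
  shows "\<exists>L. sparsely_generated \<epsilon> L"
proof -
  obtain SA SB where S: "finite SA" "SA \<subseteq> A" "finite SB" "SB \<subseteq> B"
    and E: "generate G (generate G SA \<union> SB) = D"
    using finitely_generated_factors[OF D(1) SD A B DAB] by blast
  define A0 where "A0 = generate G SA"
  define B0 where "B0 = generate G SB"
  have Ac: "A \<subseteq> carrier G" and Bc: "B \<subseteq> carrier G"
    using subgroup.subset[OF A] subgroup.subset[OF B] by auto
  have A0: "subgroup A0 G" "A0 \<subseteq> A" and B0: "subgroup B0 G" "B0 \<subseteq> B" "SB \<subseteq> B0"
    unfolding A0_def B0_def using generate_is_subgroup generate_subgroup_incl S A B Ac Bc
    by (auto intro: generate.incl)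
  have comm0: "a \<otimes> b = b \<otimes> a" if "a \<in> A0" "b \<in> B0" for a b using comm that A0 B0 by blast
  have "D \<subseteq> generate G (A0 \<union> B0)" using E B0(3) mono_generate[of "A0 \<union> SB" "A0 \<union> B0"] unfolding A0_def by blast
  then have DAB0: "D \<subseteq> A0 <#> B0" using generate_Un_commuting_subset[OF A0(1) B0(1) comm0] by blast
  have "A \<subseteq> D" "B \<subseteq> D" unfolding DAB using subset_set_mult_factors[OF A B] by auto
  then have D0: "A0 \<subseteq> D" "B0 \<subseteq> D" using A0(2) B0(2) by auto
  have dec: "\<exists>a\<in>A0. \<exists>b\<in>B0. x = a \<otimes> b" if "x \<in> D" for x
    using that DAB0 unfolding set_mult_def by blast
  have "A \<inter> B \<subseteq> centre D"
  proof
    fix x assume x: "x \<in> A \<inter> B"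
    have "x \<otimes> d = d \<otimes> x" if d: "d \<in> D" for d
    proof -
      obtain a b where ab: "a \<in> A" "b \<in> B" "d = a \<otimes> b" using d unfolding DAB set_mult_def by blast
      have c: "a \<in> carrier G" "b \<in> carrier G" "x \<in> carrier G" using ab x Ac Bc by auto
      have "x \<otimes> (a \<otimes> b) = (a \<otimes> x) \<otimes> b" using comm[OF ab(1)] x c by (simp add: m_assoc[symmetric])
      also have "\<dots> = a \<otimes> (b \<otimes> x)" using comm[of x b] x ab(2) c by (simp add: m_assoc)
      finally show ?thesis unfolding ab(3) using c by (simp add: m_assoc)
    qed
    then show "x \<in> centre D" unfolding centre_def using x \<open>A \<subseteq> D\<close> by blast
  qed
  then have finAB: "finite (A \<inter> B)" using Zfin finite_subset by blast
  have "A \<subseteq> A0 <#> (A \<inter> B)"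
  proof
    fix x assume x: "x \<in> A"
    then obtain a b where ab: "a \<in> A0" "b \<in> B0" "x = a \<otimes> b" using dec \<open>A \<subseteq> D\<close> by blast
    have c: "a \<in> carrier G" "b \<in> carrier G" using ab A0 B0 Ac Bc by auto
    have "b = inv a \<otimes> x" using ab(3) c by (simp add: inv_mult_cancel_left)
    then have "b \<in> A" using x ab(1) A0(2) subgroup.m_closed[OF A] subgroup.m_inv_closed[OF A] by auto
    then show "x \<in> A0 <#> (A \<inter> B)" using ab B0(2) unfolding set_mult_def by blast
  qed
  then have A0inf: "infinite A0" using infinite_factor finAB Ainf by blast
  have "B \<subseteq> B0 <#> (A \<inter> B)"
  proof
    fix x assume x: "x \<in> B"
    then obtain a b where ab: "a \<in> A0" "b \<in> B0" "x = a \<otimes> b" using dec \<open>B \<subseteq> D\<close> by blast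
    have c: "a \<in> carrier G" "b \<in> carrier G" using ab A0 B0 Ac Bc by auto
    have x': "x = b \<otimes> a" using ab comm0 by simp
    then have "a = inv b \<otimes> x" using c by (simp add: inv_mult_cancel_left)
    then have "a \<in> B" using x ab(2) B0(2) subgroup.m_closed[OF B] subgroup.m_inv_closed[OF B] by auto
    then show "x \<in> B0 <#> (A \<inter> B)" using ab A0(2) x' unfolding set_mult_def by blast
  qed
  then have B0inf: "infinite B0" using infinite_factor finAB Binf by blast
  show ?thesis
  proof (cases "\<forall>R. \<exists>N V. N \<lhd> G \<and> finite (rcosets N) \<and> V \<subseteq> B0 \<and> finite V \<and> \<one> \<in> V \<and>
        separated_mod ((N \<inter> D) <#> A0) V \<and> R \<le> card V")
    case True
    show ?thesis
    proof (rule sparse_of_unbounded_quotients[OF rf D S(1) _ A0_def D0(1) A0inf B0(1) D0(2) S(3) B0(3) _ _ _ eps])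
      show "SA \<subseteq> carrier G" using S(2) Ac by blast
      show "a \<otimes> b = b \<otimes> a" if "a \<in> A0" "b \<in> B0" for a b using comm0 that .
      show "generate G (A0 \<union> SB) = D" using E unfolding A0_def .
    qed (use True in blast)
  next
    case False
    then obtain R0 where bound: "\<And>N V. N \<lhd> G \<Longrightarrow> finite (rcosets N) \<Longrightarrow> V \<subseteq> B0 \<Longrightarrow> finite V \<Longrightarrow>
        \<one> \<in> V \<Longrightarrow> separated_mod ((N \<inter> D) <#> A0) V \<Longrightarrow> card V < R0"
      by (meson not_le)
    have "infinite (centre D)"
      by (rule infinite_centre_if_bounded_quotients[OF rf D(1) A0(1) D0(1) B0(1) D0(2) _ DAB0 B0inf])
        (use comm0 bound in blast)+
    then show ?thesis using Zfin by contradiction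
  qed
qed

lemma finite_index_subgroup_generated:
  assumes S: "finite S" "S \<subseteq> carrier G" "generate G S = carrier G"
    and H: "subgroup H G" "finite (rcosets H)"
  shows "\<exists>Y. finite Y \<and> Y \<subseteq> H \<and> generate G Y = H"
proof -
  have "separated_mod H {\<one>}" unfolding separated_mod_def by blast
  then obtain T where T: "{\<one>} \<subseteq> T" "T \<subseteq> carrier G" "finite T" "separated_mod H T" "covers_mod H (carrier G) T"
    using extend_to_transversal[OF H subset_refl, of "{\<one>}"] by blast
  have "\<exists>Y. finite Y \<and> Y \<subseteq> H \<and> generate G Y = H \<and> card Y \<le> card T * (2 * card S)"
    using schreier_generators[OF S(1,2) H(1) _ T(3) _ _ T(4)] T(1,2,5) S(3) subgroup.subset[OF H(1)] by auto
  then show ?thesis by blast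
qed

lemma min_generators_ge_1:
  assumes S: "finite S" "S \<subseteq> carrier G" "generate G S = carrier G"
    and inf: "infinite (carrier G)" and H: "subgroup H G" "finite (rcosets H)"
  shows "1 \<le> min_generators G H"
proof -
  obtain Y where "finite Y" "Y \<subseteq> H" "generate G Y = H"
    using finite_index_subgroup_generated[OF S H] by blast
  then have "\<exists>n S0. finite S0 \<and> S0 \<subseteq> H \<and> card S0 = n \<and> generate G S0 = H" by blast
  then have "\<exists>S0. finite S0 \<and> S0 \<subseteq> H \<and> card S0 = min_generators G H \<and> generate G S0 = H"
    unfolding min_generators_def by (rule LeastI_ex)
  then obtain S0 where S0: "finite S0" "card S0 = min_generators G H" "generate G S0 = H" by blast
  show ?thesis
  proof (rule ccontr)
    assume "\<not> 1 \<le> min_generators G H"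
    then have "card S0 = 0" using S0(2) by simp
    then have "S0 = {}" using S0(1) by simp
    then have H1: "H = {\<one>}" using S0(3) generate_empty by simp
    have "finite C" if "C \<in> rcosets H" for C
      using that H1 unfolding RCOSETS_def r_coset_def by auto
    then have "finite (\<Union>(rcosets H))" using H(2) by blast
    then show False using rcosets_part_G[OF H(1)] inf by simp
  qed
qed

lemma rank_ratio_less_if_sparse:
  assumes "sparsely_generated \<epsilon> L"
  shows "(real (min_generators G L) - 1) / real (group_index G L) < \<epsilon>"
proof -
  obtain Y where L: "subgroup L G" "finite (rcosets L)" and Y: "finite Y" "Y \<subseteq> L" "generate G Y = L"
    and lt: "real (card Y) < \<epsilon> * real (card (rcosets L))"
    using assms unfolding sparsely_generated_def by blast
  have le: "min_generators G L \<le> card Y" unfolding min_generators_def by (rule Least_le) (use Y in blast)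
  have "rcosets L \<noteq> {}" using rcosets_part_G[OF L(1)] by auto
  then have pos: "0 < card (rcosets L)" using L(2) by (simp add: card_gt_0_iff)
  have "(real (min_generators G L) - 1) / real (group_index G L) \<le> real (card Y) / real (card (rcosets L))"
    unfolding group_index_def using le pos by (intro divide_right_mono) auto
  also have "\<dots> < \<epsilon>" using lt pos by (simp add: divide_less_eq)
  finally show ?thesis .
qed

lemma rank_gradient_eq_0_if_sparse:
  assumes fg: "finitely_generated G" and inf: "infinite (carrier G)"
    and sparse: "\<And>\<epsilon>. 0 < \<epsilon> \<Longrightarrow> \<exists>L. sparsely_generated \<epsilon> L"
  shows "rank_gradient G = 0"
proof -
  obtain S where S: "finite S" "S \<subseteq> carrier G" "generate G S = carrier G"
    using fg unfolding finitely_generated_def by blast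
  define Ratios where "Ratios = {(real (min_generators G H) - 1) / real (group_index G H) | H. finite_index_subgroup G H}"
  have nonneg: "0 \<le> x" if "x \<in> Ratios" for x
    using that min_generators_ge_1[OF S inf] unfolding Ratios_def finite_index_subgroup_def by fastforce
  have "finite_index_subgroup G (carrier G)"
    unfolding finite_index_subgroup_def using subgroup_self finite_rcosets_carrier by blast
  then have ne: "Ratios \<noteq> {}" unfolding Ratios_def by blast
  have "\<exists>x\<in>Ratios. x < \<epsilon>" if eps: "0 < \<epsilon>" for \<epsilon>
  proof -
    obtain L where L: "sparsely_generated \<epsilon> L" using sparse[OF eps] by blast
    then have "finite_index_subgroup G L" unfolding sparsely_generated_def finite_index_subgroup_def by blast
    then show ?thesis using rank_ratio_less_if_sparse[OF L] unfolding Ratios_def by blast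
  qed
  moreover have "bdd_below Ratios" using nonneg by (intro bdd_belowI) blast
  ultimately have "Inf Ratios \<le> 0" using cInf_lower by (metis linorder_not_less)
  moreover have "0 \<le> Inf Ratios" using ne nonneg by (intro cInf_greatest) auto
  ultimately show ?thesis unfolding rank_gradient_def Ratios_def by simp
qed

lemma rank_gradient_eq_0_of_commuting_product:
  assumes fg: "finitely_generated G" and rf: "residually_finite G" and inf: "infinite (carrier G)"
    and D: "subgroup D G" "finite (rcosets D)" and A: "subgroup A G" and B: "subgroup B G"
    and comm: "\<And>a b. a \<in> A \<Longrightarrow> b \<in> B \<Longrightarrow> a \<otimes> b = b \<otimes> a"
    and DAB: "D = A <#> B" and Ainf: "infinite A" and Binf: "infinite B"
  shows "rank_gradient G = 0"
proof (rule rank_gradient_eq_0_if_sparse[OF fg inf])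
  fix \<epsilon> :: real assume eps: "0 < \<epsilon>"
  obtain S where S: "finite S" "S \<subseteq> carrier G" "generate G S = carrier G"
    using fg unfolding finitely_generated_def by blast
  obtain SD where SD: "finite SD" "SD \<subseteq> D" "generate G SD = D"
    using finite_index_subgroup_generated[OF S D] by blast
  show "\<exists>L. sparsely_generated \<epsilon> L"
  proof (cases "finite (centre D)")
    case True
    then show ?thesis using sparse_of_commuting_product[OF rf D SD A B _ DAB Ainf Binf _ eps] comm by blast
  next
    case False
    then show ?thesis using sparse_of_infinite_centre[OF rf D SD _ eps] by blast
  qed
qed

lemma image_of_direct_product:
  fixes G1 :: "('c, 'd) monoid_scheme" and G2 :: "('e, 'f) monoid_scheme"
  assumes G1: "group G1" and G2: "group G2" and phi: "phi \<in> hom (G1 \<times>\<times> G2) G"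
  defines "A \<equiv> phi ` (carrier G1 \<times> {\<one>\<^bsub>G2\<^esub>})" and "B \<equiv> phi ` ({\<one>\<^bsub>G1\<^esub>} \<times> carrier G2)"
  shows "subgroup A G" "subgroup B G" "\<And>a b. a \<in> A \<Longrightarrow> b \<in> B \<Longrightarrow> a \<otimes> b = b \<otimes> a"
    and "phi ` carrier (G1 \<times>\<times> G2) = A <#> B"
proof -
  interpret h: group_hom "G1 \<times>\<times> G2" G phi
    using DirProd_group[OF G1 G2] phi is_group by (simp add: group_hom_def group_hom_axioms_def)
  have o1: "\<one>\<^bsub>G1\<^esub> \<in> carrier G1" and o2: "\<one>\<^bsub>G2\<^esub> \<in> carrier G2"
    using group.is_monoid[OF G1] group.is_monoid[OF G2] monoid.one_closed by auto
  show "subgroup A G" unfolding A_def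
    using h.subgroup_img_is_subgroup[OF DirProd_subgroups[OF G1 group.subgroup_self[OF G1] G2 group.triv_subgroup[OF G2]]]
    by simp
  show "subgroup B G" unfolding B_def
    using h.subgroup_img_is_subgroup[OF DirProd_subgroups[OF G1 group.triv_subgroup[OF G1] G2 group.subgroup_self[OF G2]]]
    by simp
  have split: "phi (g1, g2) = phi (g1, \<one>\<^bsub>G2\<^esub>) \<otimes> phi (\<one>\<^bsub>G1\<^esub>, g2)"
    "phi (g1, g2) = phi (\<one>\<^bsub>G1\<^esub>, g2) \<otimes> phi (g1, \<one>\<^bsub>G2\<^esub>)"
    if "g1 \<in> carrier G1" "g2 \<in> carrier G2" for g1 g2
  proof -
    have "(g1, \<one>\<^bsub>G2\<^esub>) \<otimes>\<^bsub>G1 \<times>\<times> G2\<^esub> (\<one>\<^bsub>G1\<^esub>, g2) = (g1, g2)"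
      "(\<one>\<^bsub>G1\<^esub>, g2) \<otimes>\<^bsub>G1 \<times>\<times> G2\<^esub> (g1, \<one>\<^bsub>G2\<^esub>) = (g1, g2)"
      using that group.is_monoid[OF G1] group.is_monoid[OF G2] monoid.l_one monoid.r_one by auto
    moreover have "phi ((g1, \<one>\<^bsub>G2\<^esub>) \<otimes>\<^bsub>G1 \<times>\<times> G2\<^esub> (\<one>\<^bsub>G1\<^esub>, g2)) = phi (g1, \<one>\<^bsub>G2\<^esub>) \<otimes> phi (\<one>\<^bsub>G1\<^esub>, g2)"
      "phi ((\<one>\<^bsub>G1\<^esub>, g2) \<otimes>\<^bsub>G1 \<times>\<times> G2\<^esub> (g1, \<one>\<^bsub>G2\<^esub>)) = phi (\<one>\<^bsub>G1\<^esub>, g2) \<otimes> phi (g1, \<one>\<^bsub>G2\<^esub>)"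
      using that o1 o2 by (intro h.hom_mult; simp)+
    ultimately show "phi (g1, g2) = phi (g1, \<one>\<^bsub>G2\<^esub>) \<otimes> phi (\<one>\<^bsub>G1\<^esub>, g2)"
      "phi (g1, g2) = phi (\<one>\<^bsub>G1\<^esub>, g2) \<otimes> phi (g1, \<one>\<^bsub>G2\<^esub>)" by simp_all
  qed
  have memA: "\<exists>g1\<in>carrier G1. a = phi (g1, \<one>\<^bsub>G2\<^esub>)" if "a \<in> A" for a
    using that unfolding A_def by blast
  have memB: "\<exists>g2\<in>carrier G2. b = phi (\<one>\<^bsub>G1\<^esub>, g2)" if "b \<in> B" for b
    using that unfolding B_def by blast
  show "a \<otimes> b = b \<otimes> a" if ab: "a \<in> A" "b \<in> B" for a b
  proof -
    obtain g1 g2 where "g1 \<in> carrier G1" "g2 \<in> carrier G2" "a = phi (g1, \<one>\<^bsub>G2\<^esub>)" "b = phi (\<one>\<^bsub>G1\<^esub>, g2)"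
      using memA[OF ab(1)] memB[OF ab(2)] by blast
    then show ?thesis using split[of g1 g2] by simp
  qed
  show "phi ` carrier (G1 \<times>\<times> G2) = A <#> B"
  proof
    show "phi ` carrier (G1 \<times>\<times> G2) \<subseteq> A <#> B"
    proof
      fix x assume "x \<in> phi ` carrier (G1 \<times>\<times> G2)"
      then obtain g1 g2 where g: "g1 \<in> carrier G1" "g2 \<in> carrier G2" "x = phi (g1, g2)" by auto
      have "phi (g1, \<one>\<^bsub>G2\<^esub>) \<in> A" "phi (\<one>\<^bsub>G1\<^esub>, g2) \<in> B"
        unfolding A_def B_def using g by auto
      then show "x \<in> A <#> B" using split(1)[OF g(1,2)] g(3) unfolding set_mult_def by blast
    qed
    show "A <#> B \<subseteq> phi ` carrier (G1 \<times>\<times> G2)"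
    proof
      fix x assume "x \<in> A <#> B"
      then obtain a b where "a \<in> A" "b \<in> B" "x = a \<otimes> b" unfolding set_mult_def by blast
      then obtain g1 g2 where g: "g1 \<in> carrier G1" "g2 \<in> carrier G2" "x = phi (g1, \<one>\<^bsub>G2\<^esub>) \<otimes> phi (\<one>\<^bsub>G1\<^esub>, g2)"
        using memA memB by blast
      then have "x = phi (g1, g2)" using split(1) by simp
      then show "x \<in> phi ` carrier (G1 \<times>\<times> G2)" using g(1,2) by auto
    qed
  qed
qed

end

theorem proposition4p5:
  fixes G :: "('a, 'b) monoid_scheme"
    and G1 :: "('c, 'd) monoid_scheme" and G2 :: "('e, 'f) monoid_scheme"
    and phi :: "'c \<times> 'e \<Rightarrow> 'a"
  assumes "group G"
    and "finitely_generated G"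
    and "residually_finite G"
    and "presentable_by_product_via G G1 G2 phi"
  shows "rank_gradient G = 0"
proof -
  interpret group G by fact
  have inf: "infinite (carrier G)" and G12: "group G1" "group G2" and phi: "phi \<in> hom (G1 \<times>\<times> G2) G"
    and D: "finite_index_subgroup G (phi ` carrier (G1 \<times>\<times> G2))"
    and Ainf: "infinite (phi ` (carrier G1 \<times> {\<one>\<^bsub>G2\<^esub>}))"
    and Binf: "infinite (phi ` ({\<one>\<^bsub>G1\<^esub>} \<times> carrier G2))"
    using assms(4) unfolding presentable_by_product_via_def by auto
  note AB = image_of_direct_product[OF G12 phi]
  show ?thesis
    using rank_gradient_eq_0_of_commuting_product[OF assms(2,3) inf _ _ AB(1,2) _ AB(4) Ainf Binf]
      D AB(3) unfolding finite_index_subgroup_def by blast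
qed

end
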